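(* There exist an absolute constant $C>0$ and a sample size $m=\tilde O\!\left(\frac{1}{\epsilon^2\gamma}kD\right)$ (where $\tilde O$ hides factors polylogarithmic in $\frac{kD}{\epsilon\gamma}$) such that the following holds. Let $P$ be a set of $n$ points in $\mathbb{R}^D$, $z<n$ a positive integer, $\gamma=z/n$, $0<\epsilon\leq 0.5$, and let $S\subseteq P$ be a subset of size $m$ chosen uniformly at random. Consider $S$ as an instance of $k$-center clustering with outliers with number of outliers $z'=(1+\epsilon)\gamma|S|$. Let $\alpha>0$. Then with constant probability (over the choice of $S$): if a set $E$ of $k$ centers in $\mathbb{R}^D$ is an $\alpha$-approximate solution of $(k,z')_\epsilon$-center clustering on $S$, then $E$ is an $\alpha$-approximate solution of $(k,z)_{C\epsilon}$-center clustering on $P$.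
   Context: For a finite point set $Q\subset\mathbb{R}^D$ of size $N$ and a number $w<N$ of outliers, the $k$-center clustering with $w$ outliers problem asks for $Q'\subseteq Q$ with $|Q'|\geq N-w$ and $k$ centers $c_1,\dots,c_k\in\mathbb{R}^D$ (arbitrary points) minimizing $\max_{p\in Q'}\min_j\|p-c_j\|$; let $r_{\mathtt{opt}}(Q,w)$ be its optimal value. For $\epsilon'\geq0$ and a finite center set $A\subset\mathbb{R}^D$, $\phi_{\epsilon'}(Q,A)=\min\{\max_{p\in Q'}\min_{c\in A}\|p-c\|\;:\;Q'\subseteq Q,\ |Q'|\geq N-(1+\epsilon')w\}$. A set $A$ of $k$ centers is an $\alpha$-approximate solution of $(k,w)_{\epsilon'}$-center clustering on $Q$ if $\phi_{\epsilon'}(Q,A)\leq\alpha\, r_{\mathtt{opt}}(Q,w)$. *)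

theory Defs
  imports "HOL-Probability.Probability"
begin

text \<open>Points of R^D are represented as functions nat => real vanishing outside {..<D},
  so that the dimension D can be quantified inside the statement.\<close>

definition RD :: "nat \<Rightarrow> (nat \<Rightarrow> real) set" where
  "RD D = {p. \<forall>i\<ge>D. p i = 0}"

definition edist :: "nat \<Rightarrow> (nat \<Rightarrow> real) \<Rightarrow> (nat \<Rightarrow> real) \<Rightarrow> real" where
  "edist D p q = L2_set (\<lambda>i. p i - q i) {..<D}"

definition cover_cost :: "nat \<Rightarrow> (nat \<Rightarrow> real) set \<Rightarrow> (nat \<Rightarrow> real) set \<Rightarrow> real" where
  "cover_cost D A Q' = (if Q' = {} then 0 else Max ((\<lambda>p. Min ((\<lambda>c. edist D p c) ` A)) ` Q'))"

definition phi :: "nat \<Rightarrow> real \<Rightarrow> (nat \<Rightarrow> real) set \<Rightarrow> real \<Rightarrow> (nat \<Rightarrow> real) set \<Rightarrow> real" where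
  "phi D eps' Q w A = Min (cover_cost D A ` {Q'. Q' \<subseteq> Q \<and> real (card Q') \<ge> real (card Q) - (1 + eps') * w})"

definition centers :: "nat \<Rightarrow> nat \<Rightarrow> (nat \<Rightarrow> real) set \<Rightarrow> bool" where
  "centers D k A \<longleftrightarrow> finite A \<and> A \<noteq> {} \<and> card A \<le> k \<and> A \<subseteq> RD D"

definition r_opt :: "nat \<Rightarrow> nat \<Rightarrow> (nat \<Rightarrow> real) set \<Rightarrow> real \<Rightarrow> real" where
  "r_opt D k Q w = Inf {cover_cost D A Q' | A Q'. centers D k A \<and> Q' \<subseteq> Q \<and> real (card Q') \<ge> real (card Q) - w}"

definition approx_sol :: "nat \<Rightarrow> nat \<Rightarrow> real \<Rightarrow> (nat \<Rightarrow> real) set \<Rightarrow> real \<Rightarrow> real \<Rightarrow> (nat \<Rightarrow> real) set \<Rightarrow> bool" where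
  "approx_sol D k eps' Q w alpha A \<longleftrightarrow> centers D k A \<and> phi D eps' Q w A \<le> alpha * r_opt D k Q w"

end

theory Submission
  imports Defs
begin

text \<open>The ranges "outside a union of \<open>k\<close> balls of a common radius" have VC-dimension
  \<open>O(kD)\<close>: the lifting \<open>p \<mapsto> (p, 1, |p|\<^sup>2)\<close> turns balls into halfspaces, so balls shatter
  at most \<open>D + 2\<close> points, and by Sauer--Shelah a set of \<open>2m\<close> points has at most
  \<open>((2m + 1)\<^bsup>D + 2\<^esup> + 1)\<^sup>k\<close> traces of such unions. Chernoff bounds for sampling without
  replacement together with symmetrization against a ghost sample then show that for the
  chosen \<open>m\<close>, with probability at least \<open>1/2\<close>, the sample contains at most \<open>(1 + \<epsilon>)\<gamma>m\<close> of
  the optimal outliers of \<open>P\<close>, and no union of \<open>k\<close> balls misses at most \<open>(1 + \<epsilon>)\<^sup>2\<gamma>m\<close>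
  sample points but more than \<open>(1 + 10\<epsilon>)z\<close> points of \<open>P\<close>. On such a sample the optimal
  radius is at most that of \<open>P\<close>, and the balls of an approximate solution of radius its
  sample cost cover all but \<open>(1 + 10\<epsilon>)z\<close> points of \<open>P\<close>; so it transfers with \<open>C = 10\<close>.\<close>

section \<open>Uniform samples of fixed size\<close>

definition subsets_of_size :: "'a set \<Rightarrow> nat \<Rightarrow> 'a set set" where
  "subsets_of_size U m = {S. S \<subseteq> U \<and> card S = m}"

lemma finite_subsets_of_size: "finite U \<Longrightarrow> finite (subsets_of_size U m)"
  unfolding subsets_of_size_def by (rule finite_subset[of _ "Pow U"]) auto

lemma card_subsets_of_size: "finite U \<Longrightarrow> card (subsets_of_size U m) = card U choose m"
  unfolding subsets_of_size_def by (rule n_subsets)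

lemma binomial_diff_le_binomial_mult_power:
  assumes "i \<le> m" "m \<le> N" "N > 0"
  shows "real ((N - i) choose (m - i)) \<le> real (N choose m) * (real m / real N) ^ i"
  using assms(1)
proof (induction i)
  case 0
  then show ?case by simp
next
  case (Suc i)
  have im: "i < m" using Suc.prems by simp
  have "Suc (N - Suc i) * ((N - Suc i) choose (m - Suc i))
      = (Suc (N - Suc i) choose Suc (m - Suc i)) * Suc (m - Suc i)"
    by (rule Suc_times_binomial_eq)
  moreover have "Suc (N - Suc i) = N - i" "Suc (m - Suc i) = m - i" using im assms by auto
  ultimately have "real (N - i) * real ((N - Suc i) choose (m - Suc i))
      = real ((N - i) choose (m - i)) * real (m - i)"
    by (metis of_nat_mult)
  then have "real ((N - Suc i) choose (m - Suc i))
      = real ((N - i) choose (m - i)) * (real (m - i) / real (N - i))"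
    using im assms by (simp add: field_simps)
  also have "\<dots> \<le> (real (N choose m) * (real m / real N) ^ i) * (real m / real N)"
  proof (intro mult_mono)
    show "real (m - i) / real (N - i) \<le> real m / real N"
      using im assms mult_right_mono[of "real m" "real N" "real i"]
      by (simp add: divide_simps of_nat_diff) (simp add: algebra_simps)
  qed (use Suc.IH im in auto)
  finally show ?case by (simp add: algebra_simps)
qed

lemma card_supersets_of_size_le:
  assumes "finite U" "I \<subseteq> U" "m \<le> card U" "card U > 0"
  shows "real (card {S\<in>subsets_of_size U m. I \<subseteq> S})
    \<le> real (card U choose m) * (real m / real (card U)) ^ card I"
proof (cases "card I \<le> m")
  case False
  have "card I \<le> m" if "S \<in> subsets_of_size U m" "I \<subseteq> S" for S
    using that assms card_mono[of S I] finite_subset[of S U] unfolding subsets_of_size_def by auto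
  then have empty: "{S\<in>subsets_of_size U m. I \<subseteq> S} = {}" using False by auto
  show ?thesis unfolding empty by simp
next
  case True
  have fI: "finite I" using assms finite_subset by blast
  have "bij_betw (\<lambda>S. S - I) {S\<in>subsets_of_size U m. I \<subseteq> S} (subsets_of_size (U - I) (m - card I))"
  proof (rule bij_betw_byWitness[where f'="\<lambda>S. S \<union> I"])
    show "(\<lambda>S. S - I) ` {S \<in> subsets_of_size U m. I \<subseteq> S} \<subseteq> subsets_of_size (U - I) (m - card I)"
      unfolding subsets_of_size_def using assms by (auto intro!: card_Diff_subset dest: finite_subset)
    show "(\<lambda>S. S \<union> I) ` subsets_of_size (U - I) (m - card I) \<subseteq> {S \<in> subsets_of_size U m. I \<subseteq> S}"
    proof (rule image_subsetI)
      fix S assume S: "S \<in> subsets_of_size (U - I) (m - card I)"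
      then have "finite S" "S \<inter> I = {}" using assms unfolding subsets_of_size_def
        by (auto dest: finite_subset)
      then have "card (S \<union> I) = card S + card I" using fI by (simp add: card_Un_disjoint)
      then show "S \<union> I \<in> {S \<in> subsets_of_size U m. I \<subseteq> S}"
        using S True assms unfolding subsets_of_size_def by auto
    qed
  qed (auto simp: subsets_of_size_def)
  then have "card {S\<in>subsets_of_size U m. I \<subseteq> S} = card (subsets_of_size (U - I) (m - card I))"
    by (rule bij_betw_same_card)
  also have "\<dots> = (card U - card I) choose (m - card I)"
    using assms fI by (simp add: card_subsets_of_size card_Diff_subset)
  finally show ?thesis using binomial_diff_le_binomial_mult_power[OF True assms(3,4)] by simp
qed

text \<open>The indicators of membership in a uniformly random \<open>m\<close>-subset are negatively
  correlated, so their joint moment generating function is dominated by that of independent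
  Bernoulli variables with success probability \<open>m / card U\<close>.\<close>

lemma sum_prod_subsets_of_size_le:
  fixes u v :: real
  assumes "finite U" "A \<subseteq> U" "u \<ge> 0" "v \<ge> 0" "card U > 0" "m \<le> card U"
  shows "(\<Sum>S\<in>subsets_of_size U m. \<Prod>i\<in>A. u + v * of_bool (i \<in> S))
    \<le> real (card U choose m) * (u + v * (real m / real (card U))) ^ card A"
proof -
  define q where "q = real m / real (card U)"
  define c where "c X = v ^ card X * u ^ card (A - X)" for X
  have fA: "finite A" using assms finite_subset by blast
  have c0: "c X \<ge> 0" for X unfolding c_def using assms by simp
  have expand: "(\<Prod>i\<in>A. u + v * of_bool (i \<in> S)) = (\<Sum>X\<in>Pow A. c X * of_bool (X \<subseteq> S))" for S
  proof -
    have "(\<Prod>i\<in>X. v * of_bool (i \<in> S)) = v ^ card X * of_bool (X \<subseteq> S)" if "X \<subseteq> A" for X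
      using finite_subset[OF that fA] by (induction X rule: finite_induct) auto
    then show ?thesis
      using prod_add[OF fA, of "\<lambda>i. v * of_bool (i \<in> S)" "\<lambda>_. u"]
      unfolding c_def by (auto simp: add.commute intro: sum.cong)
  qed
  have "(\<Sum>S\<in>subsets_of_size U m. \<Prod>i\<in>A. u + v * of_bool (i \<in> S))
      = (\<Sum>X\<in>Pow A. \<Sum>S\<in>subsets_of_size U m. c X * of_bool (X \<subseteq> S))"
    unfolding expand by (rule sum.swap)
  also have "\<dots> = (\<Sum>X\<in>Pow A. c X * real (card {S\<in>subsets_of_size U m. X \<subseteq> S}))"
    by (simp add: sum_distrib_left[symmetric] finite_subsets_of_size[OF assms(1)] Int_def)
  also have "\<dots> \<le> (\<Sum>X\<in>Pow A. c X * (real (card U choose m) * q ^ card X))"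
    using card_supersets_of_size_le[OF assms(1) _ assms(6,5)] assms(2) c0
    unfolding q_def by (intro sum_mono mult_left_mono) auto
  also have "\<dots> = real (card U choose m) * (\<Sum>X\<in>Pow A. (\<Prod>i\<in>X. v * q) * (\<Prod>i\<in>A - X. u))"
    unfolding c_def by (simp add: sum_distrib_left power_mult_distrib algebra_simps)
  also have "\<dots> = real (card U choose m) * (u + v * q) ^ card A"
    using prod_add[OF fA, of "\<lambda>_. v * q" "\<lambda>_. u"] by (simp add: add.commute)
  finally show ?thesis unfolding q_def .
qed

lemma sum_prod_subsets_of_size_compl_le:
  fixes u v :: real
  assumes "finite U" "A \<subseteq> U" "u \<ge> 0" "v \<ge> 0" "card U > 0" "m \<le> card U"
  shows "(\<Sum>S\<in>subsets_of_size U m. \<Prod>i\<in>A. u + v * of_bool (i \<notin> S))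
    \<le> real (card U choose m) * (u + v * (1 - real m / real (card U))) ^ card A"
proof -
  have bij: "bij_betw (\<lambda>S. U - S) (subsets_of_size U m) (subsets_of_size U (card U - m))"
  proof (rule bij_betw_byWitness[where f'="\<lambda>S. U - S"])
    show "(\<lambda>S. U - S) ` subsets_of_size U m \<subseteq> subsets_of_size U (card U - m)"
      "(\<lambda>S. U - S) ` subsets_of_size U (card U - m) \<subseteq> subsets_of_size U m"
      unfolding subsets_of_size_def using assms by (auto simp: card_Diff_subset finite_subset)
  qed (auto simp: subsets_of_size_def)
  have q: "real (card U - m) / real (card U) = 1 - real m / real (card U)"
    using assms(5,6) by (simp add: of_nat_diff field_simps)
  have "(\<Sum>S\<in>subsets_of_size U m. \<Prod>i\<in>A. u + v * of_bool (i \<notin> S))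
      = (\<Sum>S\<in>subsets_of_size U m. \<Prod>i\<in>A. u + v * of_bool (i \<in> U - S))"
    using assms(2) by (intro sum.cong prod.cong) auto
  also have "\<dots> = (\<Sum>S\<in>subsets_of_size U (card U - m). \<Prod>i\<in>A. u + v * of_bool (i \<in> S))"
    by (rule sum.reindex_bij_betw[OF bij])
  also have "\<dots> \<le> real (card U choose (card U - m)) * (u + v * (real (card U - m) / real (card U))) ^ card A"
    using assms by (intro sum_prod_subsets_of_size_le) auto
  also have "\<dots> = real (card U choose m) * (u + v * (1 - real m / real (card U))) ^ card A"
    unfolding q by (simp add: binomial_symmetric[OF assms(6)])
  finally show ?thesis .
qed

lemma one_plus_power_le_exp:
  fixes x :: real
  assumes "x \<ge> -1"
  shows "(1 + x) ^ n \<le> exp (real n * x)"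
proof -
  have "(1 + x) ^ n \<le> exp x ^ n" using assms by (intro power_mono) auto
  then show ?thesis by (simp add: exp_of_nat_mult)
qed

lemma card_filter_mult_le_sum:
  fixes f :: "'b \<Rightarrow> real"
  assumes "finite X" "\<And>S. S \<in> X \<Longrightarrow> f S \<ge> 0" "\<And>S. S \<in> X \<Longrightarrow> P S \<Longrightarrow> f S \<ge> c"
  shows "real (card {S\<in>X. P S}) * c \<le> (\<Sum>S\<in>X. f S)"
proof -
  have "real (card {S\<in>X. P S}) * c \<le> (\<Sum>S\<in>{S\<in>X. P S}. f S)"
    using assms sum_mono[of "{S\<in>X. P S}" "\<lambda>_. c" f] by simp
  also have "\<dots> \<le> (\<Sum>S\<in>X. f S)" using assms by (intro sum_mono2) auto
  finally show ?thesis .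
qed

lemma exp_mult_card_Int_eq_prod:
  assumes "finite A"
  shows "exp (l * real (card (S \<inter> A))) = (\<Prod>i\<in>A. exp (l * of_bool (i \<in> S)))"
proof -
  have "l * real (card (S \<inter> A)) = (\<Sum>i\<in>A. l * of_bool (i \<in> S))"
    using assms Int_commute[of S A] by (simp add: sum_distrib_left[symmetric])
  then show ?thesis by (simp only: exp_sum[OF assms])
qed

lemma card_subsets_of_size_upper_tail:
  fixes mu t :: real
  assumes "finite U" "A \<subseteq> U" "card U > 0" "m \<le> card U"
    "real (card A) * real m / real (card U) \<le> mu" "0 < mu" "mu \<le> t" "t \<le> 3 * mu"
  shows "real (card {S\<in>subsets_of_size U m. t \<le> real (card (S \<inter> A))})
    \<le> real (card U choose m) * exp (- ((t - mu)^2 / (4 * mu)))"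
proof -
  define l where "l = (t - mu) / (2 * mu)"
  define q where "q = real m / real (card U)"
  have l0: "0 \<le> l" and l1: "l \<le> 1" using assms unfolding l_def by (auto simp: field_simps)
  have fA: "finite A" using assms finite_subset by blast
  have "0 \<le> (exp l - 1) * q" using l0 unfolding q_def by simp
  have "real (card {S\<in>subsets_of_size U m. t \<le> real (card (S \<inter> A))}) * exp (l * t)
      \<le> (\<Sum>S\<in>subsets_of_size U m. exp (l * real (card (S \<inter> A))))"
    using l0 by (intro card_filter_mult_le_sum finite_subsets_of_size assms(1)) (auto intro: mult_left_mono)
  also have "\<dots> = (\<Sum>S\<in>subsets_of_size U m. \<Prod>i\<in>A. 1 + (exp l - 1) * of_bool (i \<in> S))"
    unfolding exp_mult_card_Int_eq_prod[OF fA] by (intro sum.cong prod.cong) auto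
  also have "\<dots> \<le> real (card U choose m) * (1 + (exp l - 1) * q) ^ card A"
    unfolding q_def using assms l0 by (intro sum_prod_subsets_of_size_le) auto
  also have "\<dots> \<le> real (card U choose m) * exp (real (card A) * ((exp l - 1) * q))"
    using \<open>0 \<le> (exp l - 1) * q\<close> by (intro mult_left_mono one_plus_power_le_exp) auto
  also have "\<dots> \<le> real (card U choose m) * exp ((exp l - 1) * mu)"
    using assms l0 mult_left_mono[of "real (card A) * q" mu "exp l - 1"]
    unfolding q_def by (intro mult_left_mono) (auto simp: algebra_simps)
  also have "\<dots> \<le> real (card U choose m) * exp ((l + l^2) * mu)"
    using exp_bound[OF l0 l1] assms by (intro mult_left_mono) auto
  finally have "real (card {S\<in>subsets_of_size U m. t \<le> real (card (S \<inter> A))})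
      \<le> real (card U choose m) * exp ((l + l^2) * mu) / exp (l * t)"
    by (simp add: field_simps)
  also have "\<dots> = real (card U choose m) * exp ((l + l^2) * mu - l * t)"
    by (simp only: exp_diff times_divide_eq_right)
  also have "(l + l^2) * mu - l * t = - ((t - mu)^2 / (4 * mu))"
    using assms unfolding l_def by (simp add: field_simps power2_eq_square)
  finally show ?thesis .
qed

lemma card_subsets_of_size_lower_tail:
  fixes mu t :: real
  assumes "finite U" "A \<subseteq> U" "card U > 0" "m \<le> card U"
    "mu \<le> real (card A) * real m / real (card U)" "0 < mu" "0 \<le> t" "t \<le> mu"
  shows "real (card {S\<in>subsets_of_size U m. real (card (S \<inter> A)) \<le> t})
    \<le> real (card U choose m) * exp (- ((mu - t)^2 / (4 * mu)))"
proof -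
  define l where "l = (mu - t) / (2 * mu)"
  define q where "q = real m / real (card U)"
  have l0: "0 \<le> l" and l1: "l \<le> 1" using assms unfolding l_def by (auto simp: field_simps)
  have fA: "finite A" using assms finite_subset by blast
  have q: "0 \<le> q" "q \<le> 1" using assms unfolding q_def by auto
  have e1: "exp (-l) \<le> 1" using l0 by simp
  have exp_neg_le: "exp (-l) \<le> 1 - l + l^2"
  proof -
    have "1 \<le> (1 - l + l^2) * (1 + l)"
      using l0 by (simp add: algebra_simps power2_eq_square power3_eq_cube)
    then have "1 / (1 + l) \<le> 1 - l + l^2" using l0 by (simp add: field_simps)
    moreover have "exp (-l) \<le> 1 / (1 + l)"
      using l0 exp_ge_add_one_self[of l] by (simp add: exp_minus divide_simps)
    ultimately show ?thesis by linarith
  qed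
  have "real (card {S\<in>subsets_of_size U m. real (card (S \<inter> A)) \<le> t}) * exp (- l * t)
      \<le> (\<Sum>S\<in>subsets_of_size U m. exp (- l * real (card (S \<inter> A))))"
    using l0 by (intro card_filter_mult_le_sum finite_subsets_of_size assms(1)) (auto intro: mult_left_mono)
  also have "\<dots> = (\<Sum>S\<in>subsets_of_size U m. \<Prod>i\<in>A. exp (-l) + (1 - exp (-l)) * of_bool (i \<notin> S))"
    unfolding exp_mult_card_Int_eq_prod[OF fA] by (intro sum.cong prod.cong) auto
  also have "\<dots> \<le> real (card U choose m) * (exp (-l) + (1 - exp (-l)) * (1 - q)) ^ card A"
    unfolding q_def using assms e1 by (intro sum_prod_subsets_of_size_compl_le) auto
  also have "\<dots> = real (card U choose m) * (1 + (- ((1 - exp (-l)) * q))) ^ card A"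
    by (simp add: algebra_simps)
  also have "\<dots> \<le> real (card U choose m) * exp (real (card A) * (- ((1 - exp (-l)) * q)))"
    using q e1 mult_mono[of "1 - exp (-l)" 1 q 1]
    by (intro mult_left_mono one_plus_power_le_exp) auto
  also have "\<dots> \<le> real (card U choose m) * exp (- ((1 - exp (-l)) * mu))"
    using assms e1 mult_left_mono[of mu "real (card A) * q" "1 - exp (-l)"]
    unfolding q_def by (intro mult_left_mono) (auto simp: algebra_simps)
  also have "\<dots> \<le> real (card U choose m) * exp (- ((l - l^2) * mu))"
    using exp_neg_le assms by (intro mult_left_mono) auto
  finally have "real (card {S\<in>subsets_of_size U m. real (card (S \<inter> A)) \<le> t})
      \<le> real (card U choose m) * exp (- ((l - l^2) * mu)) / exp (- l * t)"
    by (simp add: field_simps)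
  also have "\<dots> = real (card U choose m) * exp (- ((l - l^2) * mu) - (- l * t))"
    by (simp only: exp_diff times_divide_eq_right)
  also have "- ((l - l^2) * mu) - (- l * t) = - ((mu - t)^2 / (4 * mu))"
    using assms unfolding l_def by (simp add: field_simps power2_eq_square)
  finally show ?thesis .
qed

section \<open>Traces of unions of balls\<close>

definition shatters :: "'a set set \<Rightarrow> 'a set \<Rightarrow> bool" where
  "shatters F Y \<longleftrightarrow> (\<forall>Z\<subseteq>Y. \<exists>B\<in>F. B \<inter> Y = Z)"

lemma shatters_image_Diff:
  assumes "shatters ((\<lambda>A. A - {x}) ` F) Y" "x \<notin> Y"
  shows "shatters F Y"
  unfolding shatters_def
proof (intro allI impI)
  fix Z assume "Z \<subseteq> Y"
  then obtain A where "A \<in> F" "(A - {x}) \<inter> Y = Z" using assms(1) unfolding shatters_def by blast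
  then show "\<exists>B\<in>F. B \<inter> Y = Z" using assms(2) by blast
qed

lemma shatters_insert:
  assumes "shatters G Y" "\<And>B. B \<in> G \<Longrightarrow> x \<notin> B \<and> B \<in> F \<and> insert x B \<in> F"
  shows "shatters F (insert x Y)"
  unfolding shatters_def
proof (intro allI impI)
  fix Z assume "Z \<subseteq> insert x Y"
  then have "Z - {x} \<subseteq> Y" by auto
  then obtain B where B: "B \<in> G" "B \<inter> Y = Z - {x}" using assms(1) unfolding shatters_def by blast
  show "\<exists>B\<in>F. B \<inter> insert x Y = Z"
  proof (cases "x \<in> Z")
    case True
    then have "insert x B \<inter> insert x Y = Z" using B(2) by blast
    then show ?thesis using assms(2)[OF B(1)] by blast
  next
    case False
    then have "B \<inter> insert x Y = Z" using B(2) assms(2)[OF B(1)] by blast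
    then show ?thesis using assms(2)[OF B(1)] by blast
  qed
qed

lemma card_split_by_element:
  assumes "finite F" "F \<subseteq> Pow (insert x T)" "x \<notin> T"
  shows "card F = card ((\<lambda>A. A - {x}) ` F) + card {B\<in>Pow T. B \<in> F \<and> insert x B \<in> F}"
proof -
  define Fo where "Fo = {B\<in>Pow T. B \<in> F}"
  define Fi where "Fi = {B\<in>Pow T. insert x B \<in> F}"
  have "inj_on (insert x) (Pow T)" using assms(3) unfolding inj_on_def by auto
  then have inj: "inj_on (insert x) Fi" by (rule inj_on_subset) (auto simp: Fi_def)
  have F: "F = Fo \<union> insert x ` Fi"
  proof
    show "F \<subseteq> Fo \<union> insert x ` Fi"
    proof
      fix A assume A: "A \<in> F"
      show "A \<in> Fo \<union> insert x ` Fi"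
      proof (cases "x \<in> A")
        case True
        then have "A = insert x (A - {x})" "A - {x} \<in> Fi"
          using A assms(2) unfolding Fi_def by (auto simp: insert_absorb)
        then show ?thesis by blast
      qed (use A assms(2) in \<open>auto simp: Fo_def\<close>)
    qed
  qed (auto simp: Fo_def Fi_def)
  have fin: "finite Fo" "finite (insert x ` Fi)" using assms(1) F by auto
  then have "finite Fi" using inj finite_imageD by blast
  have disj: "Fo \<inter> insert x ` Fi = {}" using assms(3) unfolding Fo_def Fi_def by auto
  have "(\<lambda>A. A - {x}) ` Fo = Fo" "(\<lambda>A. insert x A - {x}) ` Fi = Fi"
    using assms(3) unfolding Fo_def Fi_def by (force intro: image_cong)+
  then have "(\<lambda>A. A - {x}) ` F = Fo \<union> Fi"
    unfolding F image_Un image_image by simp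
  moreover have "{B\<in>Pow T. B \<in> F \<and> insert x B \<in> F} = Fo \<inter> Fi" unfolding Fo_def Fi_def by auto
  moreover have "card F = card Fo + card Fi"
    using card_Un_disjoint[OF fin disj] card_image[OF inj] F by simp
  ultimately show ?thesis using card_Un_Int[OF fin(1) \<open>finite Fi\<close>] by simp
qed

text \<open>Pajor's form of the Sauer--Shelah lemma.\<close>

lemma card_le_card_shattered:
  assumes "finite T" "F \<subseteq> Pow T"
  shows "card F \<le> card {Y. Y \<subseteq> T \<and> shatters F Y}"
  using assms
proof (induction T arbitrary: F rule: finite_induct)
  case empty
  show ?case
  proof (cases "F = {}")
    case False
    then have "F = {{}}" using empty subset_singleton_iff[of F "{}"] by simp
    then have "{Y. Y \<subseteq> {} \<and> shatters F Y} = {{}}" unfolding shatters_def by blast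
    then show ?thesis using \<open>F = {{}}\<close> by simp
  qed simp
next
  case (insert x T)
  define F0 where "F0 = (\<lambda>A. A - {x}) ` F"
  define F1 where "F1 = {B\<in>Pow T. B \<in> F \<and> insert x B \<in> F}"
  define Sh0 where "Sh0 = {Y. Y \<subseteq> T \<and> shatters F0 Y}"
  define Sh1 where "Sh1 = {Y. Y \<subseteq> T \<and> shatters F1 Y}"
  define Sh where "Sh = {Y. Y \<subseteq> insert x T \<and> shatters F Y}"
  have finF: "finite F" using finite_subset[OF insert.prems] insert.hyps(1) by simp
  have finSh: "finite Sh" unfolding Sh_def using insert.hyps(1) by simp
  have "card F = card F0 + card F1"
    unfolding F0_def F1_def using card_split_by_element[OF finF insert.prems insert.hyps(2)] .
  moreover have "card F0 \<le> card Sh0" unfolding Sh0_def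
    by (rule insert.IH) (use insert.prems in \<open>auto simp: F0_def\<close>)
  moreover have "card F1 \<le> card Sh1" unfolding Sh1_def
    by (rule insert.IH) (auto simp: F1_def)
  moreover have "card Sh0 + card Sh1 \<le> card Sh"
  proof -
    have sub0: "Sh0 \<subseteq> Sh"
    proof
      fix Y assume "Y \<in> Sh0"
      then have "Y \<subseteq> T" "shatters F0 Y" unfolding Sh0_def by auto
      then show "Y \<in> Sh"
        using shatters_image_Diff[of x F Y] insert.hyps(2) unfolding Sh_def F0_def by auto
    qed
    have sub1: "insert x ` Sh1 \<subseteq> Sh"
    proof (rule image_subsetI)
      fix Y assume "Y \<in> Sh1"
      then have "Y \<subseteq> T" "shatters F1 Y" unfolding Sh1_def by auto
      moreover have "\<And>B. B \<in> F1 \<Longrightarrow> x \<notin> B \<and> B \<in> F \<and> insert x B \<in> F"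
        using insert.hyps(2) unfolding F1_def by auto
      ultimately show "insert x Y \<in> Sh" unfolding Sh_def using shatters_insert[of F1 Y x F] by auto
    qed
    have "inj_on (insert x) (Pow T)" using insert.hyps(2) unfolding inj_on_def by auto
    then have inj: "inj_on (insert x) Sh1" by (rule inj_on_subset) (auto simp: Sh1_def)
    have disj: "Sh0 \<inter> insert x ` Sh1 = {}" using insert.hyps(2) unfolding Sh0_def by auto
    have fin: "finite Sh0" "finite (insert x ` Sh1)"
      using finite_subset[OF sub0 finSh] finite_subset[OF sub1 finSh] .
    have "card Sh0 + card Sh1 = card (Sh0 \<union> insert x ` Sh1)"
      using card_Un_disjoint[OF fin disj] card_image[OF inj] by simp
    also have "\<dots> \<le> card Sh" using sub0 sub1 finSh by (intro card_mono) auto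
    finally show ?thesis .
  qed
  ultimately show ?case unfolding Sh_def by linarith
qed

lemma card_subsets_card_le:
  assumes "finite B"
  shows "card {G. G \<subseteq> B \<and> card G \<le> d} \<le> (card B + 1) ^ d"
proof -
  have "{G. G \<subseteq> B \<and> card G \<le> d} = (\<Union>i\<le>d. {G. G \<subseteq> B \<and> card G = i})" by auto
  then have "card {G. G \<subseteq> B \<and> card G \<le> d} \<le> (\<Sum>i\<le>d. card B choose i)"
    using card_UN_le[of "{..d}" "\<lambda>i. {G. G \<subseteq> B \<and> card G = i}"] n_subsets[OF assms] by simp
  also have "\<dots> \<le> (\<Sum>i\<le>d. (d choose i) * card B ^ i * 1 ^ (d - i))"
  proof (rule sum_mono)
    fix i assume "i \<in> {..d}"
    have "card B choose i \<le> card B ^ i"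
      by (cases "i \<le> card B") (auto intro: binomial_le_pow simp: binomial_eq_0)
    also have "\<dots> \<le> (d choose i) * card B ^ i" using \<open>i \<in> {..d}\<close> by (simp add: Suc_leI)
    finally show "card B choose i \<le> (d choose i) * card B ^ i * 1 ^ (d - i)" by simp
  qed
  also have "\<dots> = (card B + 1) ^ d" using binomial_ring[of "card B" 1 d] by simp
  finally show ?thesis .
qed

lemma homogeneous_system_nontrivial_solution:
  fixes f :: "nat \<Rightarrow> 'a \<Rightarrow> real"
  assumes "finite Y" "card Y > K"
  shows "\<exists>w. (\<exists>y\<in>Y. w y \<noteq> 0) \<and> (\<forall>j<K. (\<Sum>y\<in>Y. w y * f j y) = 0)"
  using assms
proof (induction K arbitrary: Y f)
  case 0
  then obtain y where "y \<in> Y" by fastforce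
  then show ?case by (intro exI[of _ "\<lambda>_. 1"]) auto
next
  case (Suc K)
  show ?case
  proof (cases "\<forall>y\<in>Y. f K y = 0")
    case True
    obtain w where w: "\<exists>y\<in>Y. w y \<noteq> 0" "\<forall>j<K. (\<Sum>y\<in>Y. w y * f j y) = 0"
      using Suc.IH[of Y f] Suc.prems by auto
    have "(\<Sum>y\<in>Y. w y * f j y) = 0" if "j < Suc K" for j
      using that w(2) True by (cases "j = K") (auto intro: sum.neutral)
    then show ?thesis using w(1) by blast
  next
    case False
    then obtain y0 where y0: "y0 \<in> Y" "f K y0 \<noteq> 0" by auto
    define Y' where "Y' = Y - {y0}"
    have "finite Y'" "card Y' > K" using Suc.prems y0 unfolding Y'_def by (auto simp: card_Diff_singleton)
    text \<open>Eliminate the variable \<open>y0\<close> using equation \<open>K\<close>.\<close>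
    define g where "g j y = f j y - f j y0 * f K y / f K y0" for j y
    obtain w' where w': "\<exists>y\<in>Y'. w' y \<noteq> 0" "\<forall>j<K. (\<Sum>y\<in>Y'. w' y * g j y) = 0"
      using Suc.IH[OF \<open>finite Y'\<close> \<open>card Y' > K\<close>] by blast
    define s where "s = (\<Sum>y\<in>Y'. w' y * f K y)"
    define w where "w = w'(y0 := - s / f K y0)"
    have sumY: "(\<Sum>y\<in>Y. w y * f j y) = w y0 * f j y0 + (\<Sum>y\<in>Y'. w' y * f j y)" for j
    proof -
      have "(\<Sum>y\<in>Y. w y * f j y) = w y0 * f j y0 + (\<Sum>y\<in>Y'. w y * f j y)"
        unfolding Y'_def using Suc.prems y0 by (simp add: sum.remove)
      also have "(\<Sum>y\<in>Y'. w y * f j y) = (\<Sum>y\<in>Y'. w' y * f j y)"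
        unfolding w_def Y'_def by (intro sum.cong) auto
      finally show ?thesis .
    qed
    have "(\<Sum>y\<in>Y. w y * f j y) = 0" if "j < Suc K" for j
    proof (cases "j < K")
      case True
      have "(\<Sum>y\<in>Y'. w' y * g j y) = (\<Sum>y\<in>Y'. w' y * f j y) - f j y0 / f K y0 * s"
        unfolding g_def s_def by (simp add: sum_subtractf sum_distrib_left algebra_simps)
      then have "(\<Sum>y\<in>Y'. w' y * f j y) = f j y0 / f K y0 * s" using w'(2) True by simp
      then show ?thesis using sumY[of j] y0 unfolding w_def by simp
    next
      case False
      then have "j = K" using that by simp
      then show ?thesis using sumY[of K] y0 unfolding w_def s_def by simp
    qed
    moreover have "\<exists>y\<in>Y. w y \<noteq> 0" using w'(1) unfolding w_def Y'_def by auto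
    ultimately show ?thesis by blast
  qed
qed

text \<open>Dudley's bound on the VC-dimension of sign conditions on a \<open>K\<close>-dimensional space of
  functions.\<close>

lemma card_shattered_le_of_linear_traces:
  fixes f :: "nat \<Rightarrow> 'a \<Rightarrow> real"
  assumes "finite Y" "shatters F Y"
    and linear: "\<And>B. B \<in> F \<Longrightarrow> \<exists>a. \<forall>y\<in>Y. y \<in> B \<longleftrightarrow> (\<Sum>j<K. a j * f j y) \<le> 0"
  shows "card Y \<le> K"
proof (rule ccontr)
  have no_relation: False if v: "y0 \<in> Y" "v y0 > 0" "\<forall>j<K. (\<Sum>y\<in>Y. v y * f j y) = 0" for v y0
  proof -
    define Z where "Z = {y\<in>Y. v y \<le> 0}"
    have "Z \<subseteq> Y" unfolding Z_def by auto
    then obtain B where B: "B \<in> F" "B \<inter> Y = Z" using assms(2) unfolding shatters_def by blast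
    obtain a where a: "\<forall>y\<in>Y. y \<in> B \<longleftrightarrow> (\<Sum>j<K. a j * f j y) \<le> 0" using linear[OF B(1)] by blast
    define g where "g y = (\<Sum>j<K. a j * f j y)" for y
    have sign: "g y \<le> 0 \<longleftrightarrow> v y \<le> 0" if "y \<in> Y" for y
    proof -
      have "y \<in> B \<longleftrightarrow> y \<in> Z" using B(2) that by blast
      then show ?thesis using a that unfolding g_def Z_def by simp
    qed
    have "0 \<le> v y * g y" if "y \<in> Y" for y
      using sign[OF that] by (cases "v y \<le> 0") (auto simp: mult_nonpos_nonpos)
    moreover have "0 < v y0 * g y0" using sign[OF v(1)] v(2) by simp
    ultimately have "0 < (\<Sum>y\<in>Y. v y * g y)" using assms(1) v(1) by (intro sum_pos2) auto
    also have "(\<Sum>y\<in>Y. v y * g y) = (\<Sum>y\<in>Y. \<Sum>j<K. a j * (v y * f j y))"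
      unfolding g_def by (simp add: sum_distrib_left mult.left_commute)
    also have "\<dots> = (\<Sum>j<K. a j * (\<Sum>y\<in>Y. v y * f j y))"
      by (subst sum.swap) (simp add: sum_distrib_left)
    finally show False using v(3) by simp
  qed
  assume "\<not> card Y \<le> K"
  then obtain w where w: "\<exists>y\<in>Y. w y \<noteq> 0" "\<forall>j<K. (\<Sum>y\<in>Y. w y * f j y) = 0"
    using homogeneous_system_nontrivial_solution[OF assms(1), of K f] by auto
  then obtain y0 where y0: "y0 \<in> Y" "w y0 \<noteq> 0" by blast
  show False
  proof (cases "w y0 > 0")
    case True
    then show False using no_relation[of y0 w] y0 w(2) by blast
  next
    case False
    then have "- w y0 > 0" using y0(2) by simp
    moreover have "\<forall>j<K. (\<Sum>y\<in>Y. - w y * f j y) = 0" using w(2) by (simp add: sum_negf)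
    ultimately show False using no_relation[of y0 "\<lambda>y. - w y"] y0(1) by blast
  qed
qed

text \<open>Under the lifting \<open>p \<mapsto> (p, 1, |p|\<^sup>2)\<close> every ball becomes a halfspace.\<close>

definition lifted :: "nat \<Rightarrow> nat \<Rightarrow> (nat \<Rightarrow> real) \<Rightarrow> real" where
  "lifted D j p = (if j < D then p j else if j = D then 1 else (\<Sum>i<D. (p i)^2))"

lemma cball_eq_lifted_halfspace:
  assumes "r \<ge> 0"
  shows "\<exists>a. \<forall>p. edist D p c \<le> r \<longleftrightarrow> (\<Sum>j<D+2. a j * lifted D j p) \<le> 0"
proof (intro exI allI)
  fix p
  define a where "a j = (if j < D then -2 * c j else if j = D then (\<Sum>i<D. (c i)^2) - r^2 else 1)" for j
  have "edist D p c \<le> r \<longleftrightarrow> (\<Sum>i<D. (p i - c i)^2) \<le> r^2"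
    unfolding edist_def L2_set_def using assms real_le_lsqrt sqrt_le_D by (auto simp: power2_eq_square)
  moreover have "(\<Sum>i<D. (p i - c i)^2) = (\<Sum>i<D. (p i)^2) + (\<Sum>j<D. -2 * c j * p j) + (\<Sum>i<D. (c i)^2)"
    by (simp add: sum.distrib[symmetric] power2_eq_square algebra_simps)
  moreover have "(\<Sum>j<D. a j * lifted D j p) = (\<Sum>j<D. -2 * c j * p j)"
    by (intro sum.cong) (auto simp: a_def lifted_def)
  then have "(\<Sum>j<D+2. a j * lifted D j p) = (\<Sum>j<D. -2 * c j * p j) + ((\<Sum>i<D. (c i)^2) - r^2) + (\<Sum>i<D. (p i)^2)"
    by (simp add: numeral_2_eq_2 a_def lifted_def)
  ultimately show "edist D p c \<le> r \<longleftrightarrow> (\<Sum>j<D+2. a j * lifted D j p) \<le> 0" by linarith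
qed

definition ball_traces :: "nat \<Rightarrow> (nat \<Rightarrow> real) set \<Rightarrow> (nat \<Rightarrow> real) set set" where
  "ball_traces D T = {{p\<in>T. edist D p c \<le> r} | c r. r \<ge> 0}"

lemma card_ball_traces_le:
  assumes "finite T"
  shows "card (ball_traces D T) \<le> (card T + 1) ^ (D + 2)"
proof -
  have "card (ball_traces D T) \<le> card {Y. Y \<subseteq> T \<and> shatters (ball_traces D T) Y}"
    using assms by (intro card_le_card_shattered) (auto simp: ball_traces_def)
  also have "\<dots> \<le> card {G. G \<subseteq> T \<and> card G \<le> D + 2}"
  proof (intro card_mono)
    show "finite {G. G \<subseteq> T \<and> card G \<le> D + 2}" using assms by simp
    have "card Y \<le> D + 2" if "Y \<subseteq> T" "shatters (ball_traces D T) Y" for Y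
    proof (rule card_shattered_le_of_linear_traces[OF finite_subset[OF that(1) assms] that(2)])
      fix B assume "B \<in> ball_traces D T"
      then obtain c r where "r \<ge> 0" "B = {p\<in>T. edist D p c \<le> r}" unfolding ball_traces_def by blast
      moreover obtain a where "\<forall>p. edist D p c \<le> r \<longleftrightarrow> (\<Sum>j<D+2. a j * lifted D j p) \<le> 0"
        using cball_eq_lifted_halfspace[OF \<open>r \<ge> 0\<close>] by blast
      ultimately show "\<exists>a. \<forall>y\<in>Y. y \<in> B \<longleftrightarrow> (\<Sum>j<D+2. a j * lifted D j y) \<le> 0"
        using that(1) by blast
    qed
    then show "{Y. Y \<subseteq> T \<and> shatters (ball_traces D T) Y} \<subseteq> {G. G \<subseteq> T \<and> card G \<le> D + 2}"
      by blast
  qed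
  also have "\<dots> \<le> (card T + 1) ^ (D + 2)" by (rule card_subsets_card_le[OF assms])
  finally show ?thesis .
qed

definition cballs :: "nat \<Rightarrow> (nat \<Rightarrow> real) set \<Rightarrow> real \<Rightarrow> (nat \<Rightarrow> real) set" where
  "cballs D E r = {p. \<exists>c\<in>E. edist D p c \<le> r}"

definition cballs_traces :: "nat \<Rightarrow> nat \<Rightarrow> (nat \<Rightarrow> real) set \<Rightarrow> (nat \<Rightarrow> real) set set" where
  "cballs_traces D k T = {T \<inter> cballs D E r | E r. centers D k E \<and> r \<ge> 0}"

lemma finite_cballs_traces: "finite T \<Longrightarrow> finite (cballs_traces D k T)"
  unfolding cballs_traces_def by (rule finite_subset[of _ "Pow T"]) auto

lemma card_cballs_traces_le:
  assumes "finite T"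
  shows "card (cballs_traces D k T) \<le> ((card T + 1) ^ (D + 2) + 1) ^ k"
proof -
  define BT where "BT = ball_traces D T"
  have fBT: "finite BT" unfolding BT_def ball_traces_def
    by (rule finite_subset[of _ "Pow T"]) (use assms in auto)
  have fG: "finite {G. G \<subseteq> BT \<and> card G \<le> k}" using fBT by simp
  have "cballs_traces D k T \<subseteq> Union ` {G. G \<subseteq> BT \<and> card G \<le> k}"
  proof
    fix X assume "X \<in> cballs_traces D k T"
    then obtain E r where Er: "centers D k E" "r \<ge> 0" "X = T \<inter> cballs D E r"
      unfolding cballs_traces_def by blast
    define G where "G = (\<lambda>c. {p\<in>T. edist D p c \<le> r}) ` E"
    have "X = \<Union> G" "G \<subseteq> BT" unfolding G_def Er(3) cballs_def BT_def ball_traces_def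
      using Er(2) by auto
    moreover have "card G \<le> k"
      unfolding G_def using Er(1) unfolding centers_def by (meson card_image_le order_trans)
    ultimately show "X \<in> Union ` {G. G \<subseteq> BT \<and> card G \<le> k}" by blast
  qed
  then have "card (cballs_traces D k T) \<le> card (Union ` {G. G \<subseteq> BT \<and> card G \<le> k})"
    using fG by (intro card_mono) auto
  also have "\<dots> \<le> card {G. G \<subseteq> BT \<and> card G \<le> k}" using fG by (rule card_image_le)
  also have "\<dots> \<le> (card BT + 1) ^ k" by (rule card_subsets_card_le[OF fBT])
  also have "\<dots> \<le> ((card T + 1) ^ (D + 2) + 1) ^ k"
    using card_ball_traces_le[OF assms, of D] unfolding BT_def by (intro power_mono) auto
  finally show ?thesis .
qed

section \<open>Uniform deviation of the uncovered fraction\<close>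

lemma card_filter_bex_le:
  assumes "finite Fam" "\<And>A. A \<in> Fam \<Longrightarrow> real (card {S\<in>X. Q A S}) \<le> b"
  shows "real (card {S\<in>X. \<exists>A\<in>Fam. Q A S}) \<le> real (card Fam) * b"
proof -
  have "{S\<in>X. \<exists>A\<in>Fam. Q A S} = (\<Union>A\<in>Fam. {S\<in>X. Q A S})" by auto
  then have "card {S\<in>X. \<exists>A\<in>Fam. Q A S} \<le> (\<Sum>A\<in>Fam. card {S\<in>X. Q A S})"
    using card_UN_le[OF assms(1)] by simp
  then have "real (card {S\<in>X. \<exists>A\<in>Fam. Q A S}) \<le> (\<Sum>A\<in>Fam. real (card {S\<in>X. Q A S}))"
    unfolding of_nat_sum[symmetric] of_nat_le_iff .
  also have "\<dots> \<le> (\<Sum>A\<in>Fam. b)" using assms(2) by (rule sum_mono)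
  finally show ?thesis by simp
qed

lemma half_le_card_subsets_of_size_hitting:
  assumes "finite U" "B \<subseteq> U" "card U > 0" "m \<le> card U"
    "mu \<le> real (card B) * real m / real (card U)" "0 < mu" "0 \<le> t" "t \<le> mu"
    "exp (- ((mu - t)^2 / (4 * mu))) \<le> 1/2"
  shows "real (card U choose m) / 2 \<le> real (card {S\<in>subsets_of_size U m. t \<le> real (card (S \<inter> B))})"
proof -
  let ?X = "subsets_of_size U m"
  have fin: "finite {S\<in>?X. real (card (S \<inter> B)) \<le> t}" "finite {S\<in>?X. t \<le> real (card (S \<inter> B))}"
    using finite_subsets_of_size[OF assms(1)] by auto
  have "real (card {S\<in>?X. real (card (S \<inter> B)) \<le> t}) \<le> real (card U choose m) * (1/2)"
    using card_subsets_of_size_lower_tail[OF assms(1-8)] assms(9)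
    by (smt (verit) mult_left_mono of_nat_0_le_iff)
  moreover have "card ?X \<le> card ({S\<in>?X. real (card (S \<inter> B)) \<le> t} \<union> {S\<in>?X. t \<le> real (card (S \<inter> B))})"
    using fin by (intro card_mono) auto
  then have "card ?X \<le> card {S\<in>?X. real (card (S \<inter> B)) \<le> t} + card {S\<in>?X. t \<le> real (card (S \<inter> B))}"
    using card_Un_le order_trans by blast
  ultimately show ?thesis using card_subsets_of_size[OF assms(1), of m] by linarith
qed

definition deviating_samples ::
    "nat \<Rightarrow> nat \<Rightarrow> (nat \<Rightarrow> real) set \<Rightarrow> nat \<Rightarrow> real \<Rightarrow> real \<Rightarrow> (nat \<Rightarrow> real) set set" where
  "deviating_samples D k P m x y = {S\<in>subsets_of_size P m. \<exists>E r. centers D k E \<and> r \<ge> 0 \<and>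
      real (card (S - cballs D E r)) \<le> x \<and> y < real (card (P - cballs D E r))}"

lemma card_deviating_samples_le_union_bound:
  assumes P: "finite P" "card P > 0" "m \<le> card P"
    and mu: "0 < mu" "mu \<le> y * real m / real (card P)" and x: "0 \<le> x" "x \<le> mu"
  shows "real (card (deviating_samples D k P m x y))
    \<le> real (card (cballs_traces D k P)) * (real (card P choose m) * exp (- ((mu - x)^2 / (4 * mu))))"
proof -
  define Q where "Q Tr S \<longleftrightarrow> real (card (S \<inter> (P - Tr))) \<le> x \<and> y < real (card (P - Tr))" for Tr S
  have "deviating_samples D k P m x y \<subseteq> {S\<in>subsets_of_size P m. \<exists>Tr\<in>cballs_traces D k P. Q Tr S}"
  proof
    fix S assume "S \<in> deviating_samples D k P m x y"
    then obtain E r where S: "S \<in> subsets_of_size P m" "centers D k E" "r \<ge> 0"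
      "real (card (S - cballs D E r)) \<le> x" "y < real (card (P - cballs D E r))"
      unfolding deviating_samples_def by blast
    have "P \<inter> cballs D E r \<in> cballs_traces D k P" unfolding cballs_traces_def using S by blast
    moreover have "S \<inter> (P - P \<inter> cballs D E r) = S - cballs D E r" "P - P \<inter> cballs D E r = P - cballs D E r"
      using S(1) unfolding subsets_of_size_def by auto
    ultimately show "S \<in> {S\<in>subsets_of_size P m. \<exists>Tr\<in>cballs_traces D k P. Q Tr S}"
      using S unfolding Q_def by (intro CollectI conjI bexI) auto
  qed
  then have "real (card (deviating_samples D k P m x y))
      \<le> real (card {S\<in>subsets_of_size P m. \<exists>Tr\<in>cballs_traces D k P. Q Tr S})"
    using finite_subsets_of_size[OF P(1)] by (simp add: card_mono)
  also have "\<dots> \<le> real (card (cballs_traces D k P)) * (real (card P choose m) * exp (- ((mu - x)^2 / (4 * mu))))"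
  proof (rule card_filter_bex_le[OF finite_cballs_traces[OF P(1)]])
    fix Tr
    show "real (card {S\<in>subsets_of_size P m. Q Tr S}) \<le> real (card P choose m) * exp (- ((mu - x)^2 / (4 * mu)))"
    proof (cases "y < real (card (P - Tr))")
      case True
      have "y * real m / real (card P) \<le> real (card (P - Tr)) * real m / real (card P)"
        using True by (intro divide_right_mono mult_right_mono) auto
      then have "mu \<le> real (card (P - Tr)) * real m / real (card P)" using mu by linarith
      then have "real (card {S\<in>subsets_of_size P m. real (card (S \<inter> (P - Tr))) \<le> x})
          \<le> real (card P choose m) * exp (- ((mu - x)^2 / (4 * mu)))"
        using P mu x by (intro card_subsets_of_size_lower_tail) auto
      moreover have "card {S\<in>subsets_of_size P m. Q Tr S}
          \<le> card {S\<in>subsets_of_size P m. real (card (S \<inter> (P - Tr))) \<le> x}"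
        using finite_subsets_of_size[OF P(1)] unfolding Q_def by (intro card_mono) auto
      ultimately show ?thesis by linarith
    qed (simp add: Q_def)
  qed
  finally show ?thesis .
qed

text \<open>Symmetrization: \<open>T - S\<close> plays the role of an independent ghost sample of the
  same size as the sample \<open>S\<close>.\<close>

definition ghost_deviation ::
    "nat \<Rightarrow> nat \<Rightarrow> real \<Rightarrow> real \<Rightarrow> (nat \<Rightarrow> real) set \<Rightarrow> (nat \<Rightarrow> real) set \<Rightarrow> bool" where
  "ghost_deviation D k x x' S T \<longleftrightarrow> (\<exists>E r. centers D k E \<and> r \<ge> 0 \<and>
      real (card (S - cballs D E r)) \<le> x \<and> x' \<le> real (card ((T - S) - cballs D E r)))"

lemma card_le_card_extensions:
  assumes "finite P" "S \<subseteq> P" "card S = m" "G \<subseteq> subsets_of_size (P - S) m"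
    and "\<And>S'. S' \<in> G \<Longrightarrow> Q (S \<union> S')"
  shows "card G \<le> card {T\<in>subsets_of_size P (2 * m). S \<subseteq> T \<and> Q T}"
proof (rule card_inj_on_le)
  show "inj_on (\<lambda>S'. S \<union> S') G"
  proof (rule inj_onI)
    fix S1 S2 assume "S1 \<in> G" "S2 \<in> G" "S \<union> S1 = S \<union> S2"
    moreover have "S1 \<subseteq> P - S" "S2 \<subseteq> P - S" using calculation assms(4) unfolding subsets_of_size_def by auto
    ultimately show "S1 = S2" by blast
  qed
  show "(\<lambda>S'. S \<union> S') ` G \<subseteq> {T\<in>subsets_of_size P (2 * m). S \<subseteq> T \<and> Q T}"
  proof (rule image_subsetI)
    fix S' assume S': "S' \<in> G"
    then have "S' \<subseteq> P - S" "card S' = m" using assms(4) unfolding subsets_of_size_def by auto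
    moreover have "finite S" "finite S'" using assms(1,2) \<open>S' \<subseteq> P - S\<close> by (auto dest: finite_subset)
    ultimately have "card (S \<union> S') = 2 * m" using assms(3) by (subst card_Un_disjoint) auto
    then show "S \<union> S' \<in> {T\<in>subsets_of_size P (2 * m). S \<subseteq> T \<and> Q T}"
      using \<open>S' \<subseteq> P - S\<close> assms(2) assms(5)[OF S'] unfolding subsets_of_size_def by auto
  qed
  show "finite {T\<in>subsets_of_size P (2 * m). S \<subseteq> T \<and> Q T}"
    using finite_subsets_of_size[OF assms(1)] by simp
qed

lemma half_le_card_ghost_extensions:
  assumes P: "finite P" "0 < m" "2 * m \<le> card P"
    and mu: "0 < mu" "0 \<le> x'" "x' \<le> mu" "mu * (real (card P) - real m) \<le> (y - x) * real m"
    and half: "exp (- ((mu - x')^2 / (4 * mu))) \<le> 1/2"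
    and S: "S \<in> deviating_samples D k P m x y"
  shows "real ((card P - m) choose m) / 2
    \<le> real (card {T\<in>subsets_of_size P (2 * m). S \<subseteq> T \<and> ghost_deviation D k x x' S T})"
proof -
  obtain E r where Sm: "S \<subseteq> P" "card S = m" and E: "centers D k E" "r \<ge> 0"
    "real (card (S - cballs D E r)) \<le> x" "y < real (card (P - cballs D E r))"
    using S unfolding deviating_samples_def subsets_of_size_def by blast
  define U where "U = P - S"
  define B where "B = U - cballs D E r"
  have fS: "finite S" using Sm P finite_subset by blast
  have fU: "finite U" unfolding U_def using P by simp
  have cU: "card U = card P - m" unfolding U_def using Sm P by (simp add: card_Diff_subset fS)
  have "P - cballs D E r = B \<union> (S - cballs D E r)" "B \<inter> (S - cballs D E r) = {}"
    unfolding B_def U_def using Sm by auto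
  then have "card (P - cballs D E r) = card B + card (S - cballs D E r)"
    using fU fS unfolding B_def by (simp add: card_Un_disjoint)
  then have cB: "y - x < real (card B)" using E(3,4) by simp
  have cUr: "real (card U) = real (card P) - real m" using cU P by (simp add: of_nat_diff)
  have "mu * real (card U) \<le> real (card B) * real m"
    using mu(4) cB P(2) mult_right_mono[of "y - x" "real (card B)" "real m"] unfolding cUr by linarith
  then have mub: "mu \<le> real (card B) * real m / real (card U)"
    using P cU by (simp add: pos_le_divide_eq)
  define G where "G = {S'\<in>subsets_of_size U m. x' \<le> real (card (S' \<inter> B))}"
  have "real ((card P - m) choose m) / 2 \<le> real (card G)"
    unfolding G_def cU[symmetric] using P cU mu mub half
    by (intro half_le_card_subsets_of_size_hitting[OF fU]) (auto simp: B_def)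
  also have "card G \<le> card {T\<in>subsets_of_size P (2 * m). S \<subseteq> T \<and> ghost_deviation D k x x' S T}"
  proof (rule card_le_card_extensions[OF P(1) Sm])
    show "G \<subseteq> subsets_of_size (P - S) m" unfolding G_def U_def by auto
  next
    fix S' assume "S' \<in> G"
    then have "(S \<union> S' - S) - cballs D E r = S' \<inter> B" "x' \<le> real (card (S' \<inter> B))"
      unfolding G_def subsets_of_size_def B_def U_def by auto
    then have "x' \<le> real (card ((S \<union> S' - S) - cballs D E r))" by simp
    then show "ghost_deviation D k x x' S (S \<union> S')" unfolding ghost_deviation_def using E by blast
  qed
  finally show ?thesis by simp
qed

lemma unbalanced_halves_exponent_ge:
  fixes a x x' :: real
  assumes "0 \<le> x" "x < x'" "x' \<le> a"
  shows "x' * (x' - x)^2 / (8 * (x + x')^2) \<le> (a / 2 - a * x / (x + x'))^2 / (4 * (a / 2))"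
proof -
  have pos: "x + x' > 0" "a > 0" using assms by auto
  have diff: "a / 2 - a * x / (x + x') = a * (x' - x) / (2 * (x + x'))" using pos by (simp add: field_simps)
  have "(a * d / (2 * s))^2 / (4 * (a / 2)) = a * d^2 / (8 * s^2)" if "s > 0" for s d :: real
    using that pos by (simp add: field_simps power2_eq_square)
  then have "(a / 2 - a * x / (x + x'))^2 / (4 * (a / 2)) = a * (x' - x)^2 / (8 * (x + x')^2)"
    unfolding diff using pos(1) by blast
  moreover have "x' * (x' - x)^2 / (8 * (x + x')^2) \<le> a * (x' - x)^2 / (8 * (x + x')^2)"
    using assms pos by (intro divide_right_mono mult_right_mono) auto
  ultimately show ?thesis by simp
qed

lemma card_unbalanced_halves_le:
  assumes T: "finite T" "card T = 2 * m" "A \<subseteq> T" and x: "0 \<le> x" "x < x'" "x' \<le> real (card A)"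
  shows "real (card {S\<in>subsets_of_size T m. real (card (S \<inter> A)) \<le> real (card A) * x / (x + x')})
    \<le> real ((2 * m) choose m) * exp (- (x' * (x' - x)^2 / (8 * (x + x')^2)))"
proof -
  define a where "a = real (card A)"
  have a0: "0 < a" using x unfolding a_def by linarith
  have "0 < card T" using a0 T card_mono[OF T(1,3)] unfolding a_def by linarith
  moreover have "a * (x / (x + x')) \<le> a * (1 / 2)" using a0 x by (intro mult_left_mono) (auto simp: field_simps)
  ultimately have "real (card {S\<in>subsets_of_size T m. real (card (S \<inter> A)) \<le> a * x / (x + x')})
      \<le> real (card T choose m) * exp (- ((a / 2 - a * x / (x + x'))^2 / (4 * (a / 2))))"
    using T a0 x unfolding a_def by (intro card_subsets_of_size_lower_tail) auto
  also have "\<dots> \<le> real ((2 * m) choose m) * exp (- (x' * (x' - x)^2 / (8 * (x + x')^2)))"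
    using unbalanced_halves_exponent_ge[OF x] T(2) unfolding a_def by simp
  finally show ?thesis unfolding a_def .
qed

lemma card_ghost_deviating_halves_le:
  assumes T: "finite T" "card T = 2 * m" and x: "0 \<le> x" "x < x'"
  shows "real (card {S\<in>subsets_of_size T m. ghost_deviation D k x x' S T})
    \<le> real (card (cballs_traces D k T)) * (real ((2 * m) choose m) * exp (- (x' * (x' - x)^2 / (8 * (x + x')^2))))"
proof -
  define Q where "Q Tr S \<longleftrightarrow> real (card (S \<inter> (T - Tr))) \<le> real (card (T - Tr)) * x / (x + x')
    \<and> x' \<le> real (card (T - Tr))" for Tr S
  have "{S\<in>subsets_of_size T m. ghost_deviation D k x x' S T}
      \<subseteq> {S\<in>subsets_of_size T m. \<exists>Tr\<in>cballs_traces D k T. Q Tr S}"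
  proof
    fix S assume "S \<in> {S\<in>subsets_of_size T m. ghost_deviation D k x x' S T}"
    then obtain E r where S: "S \<subseteq> T" "card S = m" "centers D k E" "r \<ge> 0"
      "real (card (S - cballs D E r)) \<le> x" "x' \<le> real (card ((T - S) - cballs D E r))"
      unfolding subsets_of_size_def ghost_deviation_def by blast
    define A where "A = T - cballs D E r"
    have "A = (S \<inter> A) \<union> (A - S)" "(S \<inter> A) \<inter> (A - S) = {}" by auto
    then have "card A = card (S \<inter> A) + card (A - S)"
      using T(1) unfolding A_def by (metis card_Un_disjoint finite_Diff finite_Int)
    moreover have "S \<inter> A = S - cballs D E r" "A - S = (T - S) - cballs D E r"
      using S(1) unfolding A_def by auto
    ultimately have c: "real (card (S \<inter> A)) \<le> x" "x' \<le> real (card A) - real (card (S \<inter> A))"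
      using S(5,6) by simp_all
    text \<open>Weighting the two bounds by \<open>x'\<close> and \<open>x\<close> eliminates the ghost count.\<close>
    have "real (card (S \<inter> A)) * x' \<le> x * x'" using c(1) x by (intro mult_right_mono) auto
    moreover have "x * x' \<le> x * (real (card A) - real (card (S \<inter> A)))"
      using c(2) x by (intro mult_left_mono) auto
    ultimately have "real (card (S \<inter> A)) * (x + x') \<le> real (card A) * x" by (simp add: algebra_simps)
    moreover have "T - T \<inter> cballs D E r = A" unfolding A_def by blast
    ultimately have "Q (T \<inter> cballs D E r) S"
      using x c unfolding Q_def by (simp add: pos_le_divide_eq add_pos_nonneg)
    moreover have "T \<inter> cballs D E r \<in> cballs_traces D k T" unfolding cballs_traces_def using S by blast
    ultimately show "S \<in> {S\<in>subsets_of_size T m. \<exists>Tr\<in>cballs_traces D k T. Q Tr S}"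
      using S(1,2) unfolding subsets_of_size_def by blast
  qed
  then have "real (card {S\<in>subsets_of_size T m. ghost_deviation D k x x' S T})
      \<le> real (card {S\<in>subsets_of_size T m. \<exists>Tr\<in>cballs_traces D k T. Q Tr S})"
    using finite_subsets_of_size[OF T(1)] by (simp add: card_mono)
  also have "\<dots> \<le> real (card (cballs_traces D k T)) *
      (real ((2 * m) choose m) * exp (- (x' * (x' - x)^2 / (8 * (x + x')^2))))"
  proof (rule card_filter_bex_le[OF finite_cballs_traces[OF T(1)]])
    fix Tr
    show "real (card {S\<in>subsets_of_size T m. Q Tr S})
        \<le> real ((2 * m) choose m) * exp (- (x' * (x' - x)^2 / (8 * (x + x')^2)))"
    proof (cases "x' \<le> real (card (T - Tr))")
      case True
      have "card {S\<in>subsets_of_size T m. Q Tr S}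
          \<le> card {S\<in>subsets_of_size T m. real (card (S \<inter> (T - Tr))) \<le> real (card (T - Tr)) * x / (x + x')}"
        using finite_subsets_of_size[OF T(1)] unfolding Q_def by (intro card_mono) auto
      then show ?thesis using card_unbalanced_halves_le[OF T _ x True] by force
    qed (simp add: Q_def)
  qed
  finally show ?thesis .
qed

lemma sum_card_supersets_le_sum_card_subsets:
  assumes "finite P" "Bd \<subseteq> subsets_of_size P m"
  shows "(\<Sum>S\<in>Bd. real (card {T\<in>subsets_of_size P m'. S \<subseteq> T \<and> G S T}))
    \<le> (\<Sum>T\<in>subsets_of_size P m'. real (card {S\<in>subsets_of_size T m. G S T}))"
proof -
  have fin: "finite (subsets_of_size P m')" "finite (subsets_of_size P m)"
    using finite_subsets_of_size[OF assms(1)] by auto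
  have "(\<Sum>S\<in>Bd. real (card {T\<in>subsets_of_size P m'. S \<subseteq> T \<and> G S T}))
      = (\<Sum>S\<in>Bd. \<Sum>T\<in>subsets_of_size P m'. of_bool (S \<subseteq> T \<and> G S T))"
    using fin by (simp add: Int_def)
  also have "\<dots> \<le> (\<Sum>S\<in>subsets_of_size P m. \<Sum>T\<in>subsets_of_size P m'. of_bool (S \<subseteq> T \<and> G S T))"
    using assms(2) fin by (intro sum_mono2) (auto intro: sum_nonneg)
  also have "\<dots> = (\<Sum>T\<in>subsets_of_size P m'. \<Sum>S\<in>subsets_of_size P m. of_bool (S \<subseteq> T \<and> G S T))"
    by (rule sum.swap)
  also have "\<dots> = (\<Sum>T\<in>subsets_of_size P m'. real (card {S\<in>subsets_of_size T m. G S T}))"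
  proof (rule sum.cong[OF refl])
    fix T assume "T \<in> subsets_of_size P m'"
    then have "subsets_of_size P m \<inter> {S. S \<subseteq> T \<and> G S T} = {S\<in>subsets_of_size T m. G S T}"
      unfolding subsets_of_size_def by auto
    then show "(\<Sum>S\<in>subsets_of_size P m. of_bool (S \<subseteq> T \<and> G S T)) = real (card {S\<in>subsets_of_size T m. G S T})"
      using fin by simp
  qed
  finally show ?thesis .
qed

text \<open>Double counting of pairs \<open>S \<subseteq> T\<close>: every deviating sample \<open>S\<close> has at least half of
  its extensions \<open>T\<close> deviating on the ghost half, while every \<open>T\<close> has few such halves.\<close>

lemma card_deviating_samples_le_symmetrization:
  assumes P: "finite P" "0 < m" "2 * m \<le> card P" and x: "0 \<le> x" "x < x'"
    and mu: "0 < mu" "x' \<le> mu" "mu * (real (card P) - real m) \<le> (y - x) * real m"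
    and half: "exp (- ((mu - x')^2 / (4 * mu))) \<le> 1/2"
    and tau: "\<And>T. T \<subseteq> P \<Longrightarrow> card T = 2 * m \<Longrightarrow> real (card (cballs_traces D k T)) \<le> tau"
  shows "real (card (deviating_samples D k P m x y))
    \<le> 2 * tau * real (card P choose m) * exp (- (x' * (x' - x)^2 / (8 * (x + x')^2)))"
proof -
  define kap where "kap = x' * (x' - x)^2 / (8 * (x + x')^2)"
  define Bd where "Bd = deviating_samples D k P m x y"
  define Ts where "Ts = subsets_of_size P (2 * m)"
  define CC where "CC = real ((card P - m) choose m)"
  have CC0: "CC > 0" unfolding CC_def using P by simp
  have "real (card Bd) * (CC / 2) = (\<Sum>S\<in>Bd. CC / 2)" by simp
  also have "\<dots> \<le> (\<Sum>S\<in>Bd. real (card {T\<in>Ts. S \<subseteq> T \<and> ghost_deviation D k x x' S T}))"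
    unfolding CC_def Ts_def Bd_def using P x mu half
    by (intro sum_mono half_le_card_ghost_extensions) auto
  also have "\<dots> \<le> (\<Sum>T\<in>Ts. real (card {S\<in>subsets_of_size T m. ghost_deviation D k x x' S T}))"
    unfolding Ts_def Bd_def deviating_samples_def by (intro sum_card_supersets_le_sum_card_subsets P) auto
  also have "\<dots> \<le> (\<Sum>T\<in>Ts. tau * (real ((2 * m) choose m) * exp (- kap)))"
  proof (intro sum_mono)
    fix T assume "T \<in> Ts"
    then have T: "T \<subseteq> P" "card T = 2 * m" unfolding Ts_def subsets_of_size_def by auto
    have "real (card {S\<in>subsets_of_size T m. ghost_deviation D k x x' S T})
        \<le> real (card (cballs_traces D k T)) * (real ((2 * m) choose m) * exp (- kap))"
      unfolding kap_def using card_ghost_deviating_halves_le[OF finite_subset[OF T(1) P(1)] T(2) x] .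
    also have "\<dots> \<le> tau * (real ((2 * m) choose m) * exp (- kap))"
      using tau[OF T] by (intro mult_right_mono) auto
    finally show "real (card {S\<in>subsets_of_size T m. ghost_deviation D k x x' S T})
        \<le> tau * (real ((2 * m) choose m) * exp (- kap))" .
  qed
  also have "\<dots> = tau * exp (- kap) * (real (card P choose (2 * m)) * real ((2 * m) choose m))"
    using card_subsets_of_size[OF P(1), of "2 * m"] unfolding Ts_def by (simp add: mult_ac)
  also have "real (card P choose (2 * m)) * real ((2 * m) choose m) = real (card P choose m) * CC"
    using choose_mult[of m "2 * m" "card P"] P unfolding CC_def by (simp flip: of_nat_mult)
  finally have "real (card Bd) * (CC / 2) \<le> (2 * tau * real (card P choose m) * exp (- kap)) * (CC / 2)"
    by (simp add: algebra_simps)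
  then show ?thesis using CC0 unfolding Bd_def kap_def by simp
qed

section \<open>Transferring solutions from the sample\<close>

lemma cover_cost_nonneg:
  assumes "finite A" "A \<noteq> {}" "finite Q"
  shows "0 \<le> cover_cost D A Q"
proof (cases "Q = {}")
  case False
  then obtain p where p: "p \<in> Q" by blast
  have "Min ((\<lambda>c. edist D p c) ` A) \<in> (\<lambda>c. edist D p c) ` A" using assms by (intro Min_in) auto
  then have "0 \<le> Min ((\<lambda>c. edist D p c) ` A)" unfolding edist_def by auto
  also have "\<dots> \<le> Max ((\<lambda>p. Min ((\<lambda>c. edist D p c) ` A)) ` Q)" using assms p by (intro Max_ge) auto
  finally show ?thesis unfolding cover_cost_def using False by simp
qed (simp add: cover_cost_def)

lemma cover_cost_mono:
  assumes "finite A" "A \<noteq> {}" "finite Q2" "Q1 \<subseteq> Q2"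
  shows "cover_cost D A Q1 \<le> cover_cost D A Q2"
proof (cases "Q1 = {}")
  case True
  then show ?thesis using cover_cost_nonneg[OF assms(1-3)] unfolding cover_cost_def by simp
next
  case False
  then have "Max ((\<lambda>p. Min ((\<lambda>c. edist D p c) ` A)) ` Q1) \<le> Max ((\<lambda>p. Min ((\<lambda>c. edist D p c) ` A)) ` Q2)"
    using assms by (intro Max_mono) auto
  then show ?thesis unfolding cover_cost_def using False assms(4) by auto
qed

lemma cover_cost_le_iff_subset_cballs:
  assumes "finite A" "A \<noteq> {}" "finite Q" "0 \<le> r"
  shows "cover_cost D A Q \<le> r \<longleftrightarrow> Q \<subseteq> cballs D A r"
proof (cases "Q = {}")
  case False
  have fin: "finite ((\<lambda>c. edist D p c) ` A)" "(\<lambda>c. edist D p c) ` A \<noteq> {}" for p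
    using assms by auto
  have "cover_cost D A Q \<le> r \<longleftrightarrow> (\<forall>p\<in>Q. Min ((\<lambda>c. edist D p c) ` A) \<le> r)"
    unfolding cover_cost_def using False assms(3) by simp
  also have "\<dots> \<longleftrightarrow> Q \<subseteq> cballs D A r"
    unfolding cballs_def Min_le_iff[OF fin] by blast
  finally show ?thesis .
qed (use assms in \<open>simp add: cover_cost_def\<close>)

lemma card_Diff_cballs_phi_le:
  assumes "finite S" "centers D k E" "0 \<le> w" "0 \<le> eps"
  shows "0 \<le> phi D eps S w E"
    and "real (card (S - cballs D E (phi D eps S w E))) \<le> (1 + eps) * w"
proof -
  define QS where "QS = {Q'. Q' \<subseteq> S \<and> real (card S) - (1 + eps) * w \<le> real (card Q')}"
  have fE: "finite E" "E \<noteq> {}" using assms(2) unfolding centers_def by auto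
  have fQS: "finite QS" unfolding QS_def using assms(1) by simp
  have "S \<in> QS" unfolding QS_def using assms by auto
  then have "phi D eps S w E \<in> cover_cost D E ` QS"
    unfolding phi_def QS_def[symmetric] using fQS by (intro Min_in) auto
  then obtain Q1 where Q1: "Q1 \<subseteq> S" "real (card S) - (1 + eps) * w \<le> real (card Q1)"
    "phi D eps S w E = cover_cost D E Q1" unfolding QS_def by blast
  have fQ1: "finite Q1" using Q1(1) assms(1) finite_subset by blast
  show phi0: "0 \<le> phi D eps S w E" unfolding Q1(3) using cover_cost_nonneg[OF fE fQ1] .
  have "Q1 \<subseteq> cballs D E (phi D eps S w E)"
    using cover_cost_le_iff_subset_cballs[OF fE fQ1 phi0, where D=D] unfolding Q1(3) by simp
  then have "card (S - cballs D E (phi D eps S w E)) \<le> card (S - Q1)"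
    using assms(1) by (intro card_mono) auto
  also have "card (S - Q1) = card S - card Q1" using Q1(1) fQ1 by (simp add: card_Diff_subset)
  finally show "real (card (S - cballs D E (phi D eps S w E))) \<le> (1 + eps) * w"
    using Q1(2) card_mono[OF assms(1) Q1(1)] by (simp add: of_nat_diff)
qed

lemma phi_le_of_card_Diff_cballs_le:
  assumes "finite P" "centers D k E" "0 \<le> rho" "real (card (P - cballs D E rho)) \<le> (1 + C) * z"
  shows "phi D C P z E \<le> rho"
proof -
  define Q2 where "Q2 = P \<inter> cballs D E rho"
  have fE: "finite E" "E \<noteq> {}" using assms(2) unfolding centers_def by auto
  have fQ2: "finite Q2" unfolding Q2_def using assms(1) by simp
  have "card P = card Q2 + card (P - cballs D E rho)"
    unfolding Q2_def using card_Int_Diff[OF assms(1)] by (simp add: Diff_eq)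
  then have "real (card P) - (1 + C) * z \<le> real (card Q2)" using assms(4) by linarith
  then have "phi D C P z E \<le> cover_cost D E Q2"
    unfolding phi_def using assms(1) by (intro Min_le) (auto simp: Q2_def)
  also have "\<dots> \<le> rho"
    using cover_cost_le_iff_subset_cballs[OF fE fQ2 assms(3), where D=D] unfolding Q2_def by simp
  finally show ?thesis .
qed

lemma centers_zero: "k \<ge> 1 \<Longrightarrow> centers D k {\<lambda>_. 0}"
  unfolding centers_def RD_def by auto

text \<open>There are only finitely many inlier sets, so a single one of them attains the
  infimum defining \<^const>\<open>r_opt\<close> up to every \<open>\<eta> > 0\<close>.\<close>

lemma near_optimal_inliers_exist:
  assumes P: "finite P" and k: "k \<ge> 1" and w: "w \<ge> 0"
  obtains Q0 where "Q0 \<subseteq> P" "real (card P) - w \<le> real (card Q0)"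
    "\<And>\<eta>. \<eta> > 0 \<Longrightarrow> \<exists>A. centers D k A \<and> cover_cost D A Q0 \<le> r_opt D k P w + \<eta>"
proof -
  define QQ where "QQ = {Q'. Q' \<subseteq> P \<and> real (card P) - w \<le> real (card Q')}"
  define Vals where "Vals = {cover_cost D A Q' | A Q'. centers D k A \<and> Q' \<subseteq> P \<and> real (card Q') \<ge> real (card P) - w}"
  have "\<exists>Q0\<in>QQ. \<forall>\<eta>>0. \<exists>A. centers D k A \<and> cover_cost D A Q0 \<le> r_opt D k P w + \<eta>"
  proof (rule ccontr)
    assume "\<not> ?thesis"
    then have "\<forall>Q\<in>QQ. \<exists>\<eta>>0. \<forall>A. centers D k A \<longrightarrow> r_opt D k P w + \<eta> < cover_cost D A Q"
      by (auto simp: not_le)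
    then obtain f where f: "\<forall>Q\<in>QQ. f Q > 0 \<and> (\<forall>A. centers D k A \<longrightarrow> r_opt D k P w + f Q < cover_cost D A Q)"
      by metis
    have fQQ: "finite QQ" unfolding QQ_def using P by simp
    have "P \<in> QQ" unfolding QQ_def using w by auto
    define e0 where "e0 = Min (f ` QQ)"
    have e0: "e0 > 0" unfolding e0_def using fQQ \<open>P \<in> QQ\<close> f by (subst Min_gr_iff) auto
    have "cover_cost D {\<lambda>_. 0} P \<in> Vals" unfolding Vals_def using centers_zero[OF k, of D] w by force
    then have "Vals \<noteq> {}" by blast
    then have "r_opt D k P w + e0 \<le> Inf Vals"
    proof (rule cInf_greatest)
      fix v assume "v \<in> Vals"
      then obtain A Q' where AQ: "v = cover_cost D A Q'" "centers D k A" "Q' \<in> QQ"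
        unfolding Vals_def QQ_def by blast
      have "e0 \<le> f Q'" unfolding e0_def using fQQ AQ(3) by (intro Min_le) auto
      then show "r_opt D k P w + e0 \<le> v" using f AQ by fastforce
    qed
    then show False using e0 unfolding r_opt_def Vals_def by simp
  qed
  then show ?thesis using that unfolding QQ_def by blast
qed

lemma r_opt_le_of_card_Diff_le:
  assumes P: "finite P" "S \<subseteq> P"
    and Q0: "Q0 \<subseteq> P" "\<And>\<eta>. \<eta> > 0 \<Longrightarrow> \<exists>A. centers D k A \<and> cover_cost D A Q0 \<le> r_opt D k P z + \<eta>"
    and few: "real (card (S - Q0)) \<le> w"
  shows "r_opt D k S w \<le> r_opt D k P z"
proof (rule field_le_epsilon)
  fix \<eta> :: real assume "0 < \<eta>"
  then obtain A where A: "centers D k A" "cover_cost D A Q0 \<le> r_opt D k P z + \<eta>" using Q0(2) by blast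
  have fA: "finite A" "A \<noteq> {}" using A(1) unfolding centers_def by auto
  have fS: "finite S" using P finite_subset by blast
  define Vals where "Vals = {cover_cost D A Q' | A Q'. centers D k A \<and> Q' \<subseteq> S \<and> real (card S) - w \<le> real (card Q')}"
  have "card S = card (S \<inter> Q0) + card (S - Q0)" using fS by (rule card_Int_Diff)
  then have "cover_cost D A (S \<inter> Q0) \<in> Vals" unfolding Vals_def using A(1) few by force
  moreover have "bdd_below Vals"
  proof (rule bdd_belowI)
    fix v assume "v \<in> Vals"
    then obtain A' Q' where "v = cover_cost D A' Q'" "centers D k A'" "Q' \<subseteq> S" unfolding Vals_def by blast
    then show "0 \<le> v" using cover_cost_nonneg[of A' Q' D] fS unfolding centers_def by (auto dest: finite_subset)
  qed
  ultimately have "r_opt D k S w \<le> cover_cost D A (S \<inter> Q0)" unfolding r_opt_def Vals_def[symmetric]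
    by (rule cInf_lower)
  also have "\<dots> \<le> cover_cost D A Q0"
    using fA Q0(1) P by (intro cover_cost_mono) (auto dest: finite_subset)
  finally show "r_opt D k S w \<le> r_opt D k P z + \<eta>" using A(2) by simp
qed

lemma approx_sol_transfer:
  assumes P: "finite P" "S \<subseteq> P" and "0 \<le> w" "0 \<le> eps" "0 < alpha"
    and Q0: "Q0 \<subseteq> P" "\<And>\<eta>. \<eta> > 0 \<Longrightarrow> \<exists>A. centers D k A \<and> cover_cost D A Q0 \<le> r_opt D k P z + \<eta>"
    and few_outliers: "real (card (S - Q0)) \<le> w"
    and typical: "S \<in> subsets_of_size P m - deviating_samples D k P m ((1 + eps) * w) ((1 + C) * z)"
    and approx: "approx_sol D k eps S w alpha E"
  shows "approx_sol D k C P z alpha E"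
proof -
  have fS: "finite S" using P finite_subset by blast
  have no_deviation: "real (card (P - cballs D E r)) \<le> (1 + C) * z"
    if "centers D k E" "r \<ge> 0" "real (card (S - cballs D E r)) \<le> (1 + eps) * w" for E r
    using typical that unfolding deviating_samples_def by (auto simp: not_less)
  have E: "centers D k E" and phS: "phi D eps S w E \<le> alpha * r_opt D k S w"
    using approx unfolding approx_sol_def by auto
  have "phi D C P z E \<le> phi D eps S w E"
    using card_Diff_cballs_phi_le[OF fS E \<open>0 \<le> w\<close> \<open>0 \<le> eps\<close>] no_deviation[OF E]
    by (intro phi_le_of_card_Diff_cballs_le[OF P(1) E]) auto
  also have "\<dots> \<le> alpha * r_opt D k P z"
    using phS r_opt_le_of_card_Diff_le[OF P Q0 few_outliers] mult_left_mono[of _ _ alpha] \<open>0 < alpha\<close>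
    by (smt (verit))
  finally show ?thesis unfolding approx_sol_def using E by simp
qed

section \<open>The sample size\<close>

lemma power_plus_one_le_power_Suc:
  fixes a :: nat
  assumes "d \<ge> 1"
  shows "a ^ d + 1 \<le> (a + 1) ^ d"
  using assms
proof (induction d rule: dec_induct)
  case (step d)
  have "a ^ Suc d + 1 \<le> (a ^ d + 1) * (a + 1)" by (simp add: algebra_simps)
  also have "\<dots> \<le> (a + 1) ^ d * (a + 1)" using step.IH by (intro mult_right_mono) auto
  finally show ?case by (simp add: algebra_simps)
qed simp

lemma two_power_le_exp: "(2::real) ^ n \<le> exp (real n)"
proof -
  have "(2::real) ^ n \<le> exp 1 ^ n" using exp_ge_add_one_self[of 1] by (intro power_mono) auto
  then show ?thesis by (simp add: exp_of_nat_mult[symmetric])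
qed

definition sample_size :: "nat \<Rightarrow> nat \<Rightarrow> real \<Rightarrow> real \<Rightarrow> nat" where
  "sample_size k D eps g =
    nat \<lceil>10000 * (real k * real D / (eps^2 * g)) * ln (real k * real D / (eps^2 * g))\<rceil>"

context
  fixes k D :: nat and eps g :: real
  assumes k: "k \<ge> 1" and D: "D \<ge> 1" and eps: "0 < eps" "eps \<le> 1/2" and g: "0 < g" "g < 1"
begin

lemma sample_size_bounds:
  defines "L \<equiv> real k * real D / (eps^2 * g)"
  shows "4 \<le> L" "1 \<le> ln L" "10000 * L * ln L \<le> real (sample_size k D eps g)"
    "real (sample_size k D eps g) \<le> 10000 * L * ln L + 1"
proof -
  have KD: "1 \<le> real k * real D" using k D mult_mono[of 1 "real k" 1 "real D"] by simp
  have "eps^2 \<le> 1/4" using eps power_mono[of eps "1/2" 2] by (simp add: power2_eq_square)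
  then have "eps^2 * g \<le> 1/4" using mult_mono[of "eps^2" "1/4" g 1] g by simp
  then show L4: "4 \<le> L" unfolding L_def using eps g KD by (simp add: pos_le_divide_eq)
  have "exp 1 \<le> L" using exp_le L4 by linarith
  then show lnL: "1 \<le> ln L" using ln_exp[of 1] ln_le_cancel_iff[of "exp 1" L] L4 by simp
  have "1 \<le> L * ln L" using mult_mono[of 1 L 1 "ln L"] L4 lnL by simp
  then have "real (sample_size k D eps g) = of_int \<lceil>10000 * L * ln L\<rceil>"
    unfolding sample_size_def L_def by simp
  then show "10000 * L * ln L \<le> real (sample_size k D eps g)"
    "real (sample_size k D eps g) \<le> 10000 * L * ln L + 1"
    by (simp_all add: le_of_int_ceiling of_int_ceiling_le_add_one)
qed

lemma sample_size_ge_one: "1 \<le> sample_size k D eps g"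
proof -
  have "4 * 1 \<le> real k * real D / (eps^2 * g) * ln (real k * real D / (eps^2 * g))"
    using sample_size_bounds(1,2) by (intro mult_mono) auto
  then have "1 \<le> real (sample_size k D eps g)" using sample_size_bounds(3) by linarith
  then show ?thesis by simp
qed

lemma sample_size_le:
  "real (sample_size k D eps g)
    \<le> 20002 * (real k * real D / (eps^2 * g)) * ln (real k * real D / (eps * g))"
proof -
  define L where "L = real k * real D / (eps^2 * g)"
  define X where "X = real k * real D / (eps * g)"
  have KD: "1 \<le> real k * real D" using k D mult_mono[of 1 "real k" 1 "real D"] by simp
  have L4: "4 \<le> L" and lnL: "1 \<le> ln L" using sample_size_bounds(1,2) unfolding L_def by auto
  have X0: "0 < X" unfolding X_def using KD eps g by simp
  have "X^2 = L * (real k * real D / g)" unfolding X_def L_def using eps g by (simp add: field_simps power2_eq_square)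
  moreover have "1 \<le> real k * real D / g" using KD g by (simp add: pos_le_divide_eq)
  ultimately have "L \<le> X^2" using L4 mult_left_mono[of 1 "real k * real D / g" L] by simp
  then have "ln L \<le> 2 * ln X" using L4 X0 ln_le_cancel_iff[of L "X^2"] by (simp add: ln_realpow)
  have "real (sample_size k D eps g) \<le> 10000 * L * ln L + 1" using sample_size_bounds(4) unfolding L_def .
  also have "\<dots> \<le> 10001 * (L * ln L)" using L4 lnL mult_mono[of 1 L 1 "ln L"] by simp
  also have "\<dots> \<le> 10001 * (L * (2 * ln X))" using \<open>ln L \<le> 2 * ln X\<close> L4 by (intro mult_left_mono) auto
  finally show ?thesis unfolding L_def X_def by simp
qed

lemma ln_twice_sample_size_le:
  "ln (2 * real (sample_size k D eps g) + 2) \<le> 20 + 2 * ln (real k * real D / (eps^2 * g))"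
proof -
  define L where "L = real k * real D / (eps^2 * g)"
  have L4: "4 \<le> L" and lnL: "1 \<le> ln L" using sample_size_bounds(1,2) unfolding L_def by auto
  have "L * ln L \<le> L * L" using ln_le_minus_one[of L] L4 by (intro mult_left_mono) auto
  moreover have "1 \<le> L * L" using mult_mono[of 1 L 1 L] L4 by simp
  ultimately have "2 * real (sample_size k D eps g) + 2 \<le> 20004 * L^2"
    using sample_size_bounds(4) unfolding L_def power2_eq_square by linarith
  also have "\<dots> \<le> exp 20 * L^2"
    using two_power_le_exp[of 20] by (intro mult_right_mono) auto
  finally have "ln (2 * real (sample_size k D eps g) + 2) \<le> ln (exp 20 * L^2)"
    using L4 by (subst ln_le_cancel_iff) auto
  also have "\<dots> = 20 + 2 * ln L" using L4 by (simp add: ln_mult ln_realpow)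
  finally show ?thesis unfolding L_def .
qed

text \<open>The sample size is chosen so that this failure bound, a union bound over the
  \<open>((2m + 1)\<^bsup>D + 2\<^esup> + 1)\<^sup>k\<close> traces of \<open>k\<close> balls on \<open>2m\<close> points times a Chernoff tail, is small.\<close>

lemma sample_size_tail_le:
  defines "m \<equiv> sample_size k D eps g"
  shows "8 * real (((2 * m + 1) ^ (D + 2) + 1) ^ k) * exp (- (eps^2 * (g * real m) / 50)) \<le> 1"
proof -
  define L where "L = real k * real D / (eps^2 * g)"
  have KD: "1 \<le> real k * real D" using k D mult_mono[of 1 "real k" 1 "real D"] by simp
  have lnL: "1 \<le> ln L" using sample_size_bounds(2) unfolding L_def .
  have "(2 * m + 1) ^ (D + 2) + 1 \<le> (2 * m + 2) ^ (D + 2)"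
    using power_plus_one_le_power_Suc[of "D + 2" "2 * m + 1"] by simp
  then have "((2 * m + 1) ^ (D + 2) + 1) ^ k \<le> (2 * m + 2) ^ ((D + 2) * k)"
    unfolding power_mult by (rule power_mono) simp
  then have "real (((2 * m + 1) ^ (D + 2) + 1) ^ k) \<le> real ((2 * m + 2) ^ ((D + 2) * k))"
    by (simp only: of_nat_le_iff)
  also have "\<dots> = (2 * real m + 2) ^ ((D + 2) * k)" by (simp add: add.commute)
  also have "\<dots> = exp (real ((D + 2) * k) * ln (2 * real m + 2))"
    by (subst exp_of_nat_mult) simp
  also have "\<dots> \<le> exp (real ((D + 2) * k) * (20 + 2 * ln L))"
    using ln_twice_sample_size_le unfolding m_def L_def by (intro exp_mono mult_left_mono) auto
  also have "\<dots> \<le> exp (60 * (real k * real D) + 6 * (real k * real D * ln L))"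
  proof -
    have "real ((D + 2) * k) \<le> 3 * (real k * real D)" using D k by simp
    then have "real ((D + 2) * k) * (20 + 2 * ln L) \<le> 3 * (real k * real D) * (20 + 2 * ln L)"
      using lnL by (intro mult_right_mono) auto
    then show ?thesis by (simp add: algebra_simps)
  qed
  finally have tau: "real (((2 * m + 1) ^ (D + 2) + 1) ^ k) \<le> exp (60 * (real k * real D) + 6 * (real k * real D * ln L))" .
  have "10000 * (real k * real D * ln L) = eps^2 * g * (10000 * L * ln L)"
    unfolding L_def using eps g by (simp add: field_simps)
  also have "\<dots> \<le> eps^2 * g * real m"
    using sample_size_bounds(3) eps g unfolding m_def L_def by (intro mult_left_mono) auto
  finally have "10000 * (real k * real D * ln L) \<le> eps^2 * (g * real m)" by (simp only: mult.assoc)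
  moreover have "real k * real D \<le> real k * real D * ln L" using KD lnL mult_left_mono[of 1 "ln L"] by simp
  ultimately have "3 + 60 * (real k * real D) + 6 * (real k * real D * ln L) \<le> eps^2 * (g * real m) / 50"
    using KD by linarith
  moreover have "8 \<le> exp (3::real)" using two_power_le_exp[of 3] by simp
  ultimately have "8 * real (((2 * m + 1) ^ (D + 2) + 1) ^ k) * exp (- (eps^2 * (g * real m) / 50))
      \<le> exp 3 * exp (60 * (real k * real D) + 6 * (real k * real D * ln L)) * exp (- (eps^2 * (g * real m) / 50))"
    using tau by (intro mult_right_mono mult_mono) auto
  also have "\<dots> \<le> exp 0"
    unfolding mult_exp_exp using \<open>3 + 60 * _ + 6 * _ \<le> _\<close> by simp
  finally show ?thesis by simp
qed

end

section \<open>The probability of a good sample\<close>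

text \<open>With \<open>u = \<gamma> m\<close> the expected number of outliers in the sample, the deviation argument
  compares the thresholds \<open>(1 + \<epsilon>)\<^sup>2 u\<close> on the sample, \<open>(1 + 5\<epsilon>) u\<close> on the ghost sample and
  \<open>(1 + 10\<epsilon>) u\<close> for the mean; each of the resulting Chernoff exponents is at least
  \<open>\<epsilon>\<^sup>2 u / 50\<close>.\<close>

lemma symmetrization_exponent_ge:
  fixes u e :: real
  assumes u: "0 < u" and e: "0 < e" "e \<le> 1/2"
  shows "e^2 * u / 50 \<le>
    ((1 + 5*e) * u) * ((1 + 5*e) * u - (1 + e)^2 * u)^2 / (8 * ((1 + e)^2 * u + (1 + 5*e) * u)^2)"
proof -
  define x where "x = (1 + e)^2 * u"
  define x' where "x' = (1 + 5*e) * u"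
  define d where "d = x' - x"
  define s where "s = x + x'"
  have d: "5/2 * e * u \<le> d"
  proof -
    have "d = (3 * e - e^2) * u" unfolding d_def x_def x'_def by (simp add: power2_eq_square algebra_simps)
    moreover have "e * e \<le> e * (1/2)" using e by (intro mult_left_mono) auto
    then have "5/2 * e \<le> 3 * e - e^2" by (simp add: power2_eq_square)
    ultimately show ?thesis using u by (simp add: mult_right_mono)
  qed
  have s: "s \<le> 6 * u" "0 < s"
  proof -
    have "s = (2 + 7 * e + e^2) * u" unfolding s_def x_def x'_def by (simp add: power2_eq_square algebra_simps)
    moreover have "e * e \<le> e * (1/2)" using e by (intro mult_left_mono) auto
    then have "2 + 7 * e + e^2 \<le> 6" using e unfolding power2_eq_square by linarith
    moreover have "0 < 2 + 7 * e + e^2" using e by (simp add: add_pos_nonneg)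
    ultimately show "s \<le> 6 * u" "0 < s" using u by (simp_all add: mult_right_mono)
  qed
  have x': "u \<le> x'" unfolding x'_def using u e by simp
  have d2: "(5/2 * e * u)^2 \<le> d^2" using d e u by (intro power_mono) auto
  have s2: "s^2 \<le> (6 * u)^2" using s by (intro power_mono) auto
  have num: "u * (5/2 * e * u)^2 \<le> x' * d^2" using x' d2 u by (intro mult_mono) auto
  have "0 \<le> x' * d^2" using x' u by simp
  have "u * (5/2 * e * u)^2 / (8 * (6 * u)^2) \<le> x' * d^2 / (8 * s^2)"
    using num s2 s u \<open>0 \<le> x' * d^2\<close> by (intro frac_le) (auto intro: mult_nonneg_nonneg)
  moreover have "u * (5/2 * e * u)^2 / (8 * (6 * u)^2) = 25 / 1152 * (e^2 * u)"
    using u by (simp add: field_simps power2_eq_square)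
  moreover have "e^2 * u / 50 \<le> 25 / 1152 * (e^2 * u)" using u by simp
  ultimately show ?thesis unfolding x_def x'_def d_def s_def by linarith
qed

lemma ghost_exponent_ge:
  fixes u e :: real
  assumes u: "0 < u" and e: "0 < e" "e \<le> 1/2"
  shows "e^2 * u / 50 \<le> ((1 + 10*e) * u - (1 + 5*e) * u)^2 / (4 * ((1 + 10*e) * u))"
proof -
  have a: "(1 + 10*e) * u - (1 + 5*e) * u = 5 * e * u" by (simp add: algebra_simps)
  have c: "0 < 4 * ((1 + 10*e) * u)" using u e by simp
  have "e^2 * u / 50 * (4 * ((1 + 10*e) * u)) \<le> (5 * e * u)^2"
  proof -
    have eq1: "e^2 * u / 50 * (4 * ((1 + 10*e) * u)) = (4 * (1 + 10*e) / 50) * (e^2 * u^2)"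
      by (simp add: field_simps power2_eq_square)
    have eq2: "(5 * e * u)^2 = 25 * (e^2 * u^2)" by (simp add: power2_eq_square)
    have "4 * (1 + 10*e) / 50 \<le> 25" using e by simp
    then have "(4 * (1 + 10*e) / 50) * (e^2 * u^2) \<le> 25 * (e^2 * u^2)" by (intro mult_right_mono) auto
    then show ?thesis unfolding eq1 eq2 .
  qed
  then show ?thesis unfolding a pos_le_divide_eq[OF c] .
qed

lemma direct_exponent_ge:
  fixes u e :: real
  assumes u: "0 < u" and e: "0 < e" "e \<le> 1/2"
  shows "e^2 * u / 50 \<le> ((1 + 10*e) * u - (1 + e)^2 * u)^2 / (4 * ((1 + 10*e) * u))"
proof -
  have "(1 + 10*e) * u - (1 + e)^2 * u = (8 * e - e^2) * u" by (simp add: power2_eq_square algebra_simps)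
  moreover have "(8 * e - e^2) * u \<ge> (1 + 10*e) * u - (1 + 5*e) * u"
  proof -
    have "e * e \<le> e * (1/2)" using e by (intro mult_left_mono) auto
    then have "5 * e \<le> 8 * e - e^2" using e by (simp add: power2_eq_square)
    then show ?thesis using u by (simp add: algebra_simps mult_right_mono)
  qed
  moreover have "0 \<le> (1 + 10*e) * u - (1 + 5*e) * u" using u e by (simp add: algebra_simps)
  ultimately have "((1 + 10*e) * u - (1 + 5*e) * u)^2 \<le> ((1 + 10*e) * u - (1 + e)^2 * u)^2"
    by (intro power_mono) auto
  then have "((1 + 10*e) * u - (1 + 5*e) * u)^2 / (4 * ((1 + 10*e) * u)) \<le> ((1 + 10*e) * u - (1 + e)^2 * u)^2 / (4 * ((1 + 10*e) * u))"
    using u e by (intro divide_right_mono) auto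
  then show ?thesis using ghost_exponent_ge[OF assms] by linarith
qed


lemma deviation_thresholds:
  fixes u e :: real
  assumes "0 < u" "0 < e" "e \<le> 1/2"
  shows "0 \<le> (1 + e)^2 * u" "(1 + e)^2 * u < (1 + 5 * e) * u" "(1 + 5 * e) * u \<le> (1 + 10 * e) * u"
proof -
  show "0 \<le> (1 + e)^2 * u" using assms by simp
  have "e * e \<le> e * (1/2)" using assms by (intro mult_left_mono) auto
  then have "(1 + e)^2 < 1 + 5 * e" using assms unfolding power2_eq_square by (simp add: algebra_simps)
  then show "(1 + e)^2 * u < (1 + 5 * e) * u" using assms by (intro mult_strict_right_mono)
  show "(1 + 5 * e) * u \<le> (1 + 10 * e) * u" using assms by (intro mult_right_mono) auto
qed

text \<open>In the following three lemmas the hypothesis \<open>tail\<close> is the inequality guaranteed by the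
  choice of the sample size.\<close>

lemma card_samples_with_many_outliers_le_quarter:
  fixes g e :: real and m k D :: nat
  defines "u \<equiv> g * real m"
  assumes P: "finite P" "0 < m" "m \<le> card P"
    and Q0: "Q0 \<subseteq> P" "real (card P) - real z \<le> real (card Q0)"
    and e: "0 < e" "e \<le> 1/2" and g: "0 < g" "real z = g * real (card P)"
    and tail: "8 * real (((2 * m + 1) ^ (D + 2) + 1) ^ k) * exp (- (e^2 * u / 50)) \<le> 1"
  shows "real (card {S\<in>subsets_of_size P m. (1 + e) * u \<le> real (card (S \<inter> (P - Q0)))})
    \<le> real (card P choose m) / 4"
proof -
  have u: "0 < u" unfolding u_def using g P by simp
  have "real (card (P - Q0)) \<le> real z"
    using Q0 P card_mono[OF P(1) Q0(1)] by (simp add: card_Diff_subset finite_subset of_nat_diff)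
  then have "real (card (P - Q0)) * real m / real (card P) \<le> real z * real m / real (card P)"
    by (intro divide_right_mono mult_right_mono) auto
  also have "\<dots> = u" using P(2,3) unfolding u_def g(2) by simp
  finally have "real (card (P - Q0)) * real m / real (card P) \<le> u" .
  then have "real (card {S\<in>subsets_of_size P m. (1 + e) * u \<le> real (card (S \<inter> (P - Q0)))})
      \<le> real (card P choose m) * exp (- (((1 + e) * u - u)^2 / (4 * u)))"
    using P u e by (intro card_subsets_of_size_upper_tail) auto
  also have "((1 + e) * u - u)^2 / (4 * u) = e^2 * u / 4" using u by (simp add: field_simps power2_eq_square)
  also have "real (card P choose m) * exp (- (e^2 * u / 4)) \<le> real (card P choose m) * (1/8)"
  proof -
    define tau where "tau = real (((2 * m + 1) ^ (D + 2) + 1) ^ k)"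
    have "1 \<le> tau" unfolding tau_def by simp
    then have "8 * exp (- (e^2 * u / 50)) \<le> 8 * tau * exp (- (e^2 * u / 50))" by simp
    then have "exp (- (e^2 * u / 50)) \<le> 1/8" using tail unfolding tau_def by linarith
    moreover have "exp (- (e^2 * u / 4)) \<le> exp (- (e^2 * u / 50))" using u by simp
    ultimately have "exp (- (e^2 * u / 4)) \<le> 1/8" by linarith
    then show ?thesis by (intro mult_left_mono) auto
  qed
  finally show ?thesis by simp
qed

lemma card_deviating_samples_le_quarter_symmetrized:
  fixes g e :: real and m k D :: nat
  defines "u \<equiv> g * real m" and "tau \<equiv> real (((2 * m + 1) ^ (D + 2) + 1) ^ k)"
  assumes P: "finite P" "0 < m" "2 * m \<le> card P" and e: "0 < e" "e \<le> 1/2"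
    and g: "0 < g" "real z = g * real (card P)"
    and tail: "8 * tau * exp (- (e^2 * u / 50)) \<le> 1"
  shows "real (card (deviating_samples D k P m ((1 + e)^2 * u) ((1 + 10 * e) * real z)))
    \<le> real (card P choose m) / 4"
proof -
  define x where "x = (1 + e)^2 * u"
  define x' where "x' = (1 + 5 * e) * u"
  define mu where "mu = (1 + 10 * e) * u"
  define y where "y = (1 + 10 * e) * real z"
  have u: "0 < u" unfolding u_def using g P by simp
  have x: "0 \<le> x" "x < x'" "x' \<le> mu" unfolding x_def x'_def mu_def using deviation_thresholds[OF u e] .
  have tau1: "1 \<le> tau" unfolding tau_def by simp
  have "mu * (real (card P) - real m) \<le> (y - x) * real m"
  proof -
    have "(y - x) * real m - mu * (real (card P) - real m) = g * real m * real m * (8 * e - e^2)"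
      unfolding y_def x_def mu_def u_def g(2) by (simp add: algebra_simps power2_eq_square)
    moreover have "e * e \<le> e * (1/2)" using e by (intro mult_left_mono) auto
    then have "0 \<le> g * real m * real m * (8 * e - e^2)" using e g by (simp add: power2_eq_square)
    ultimately show ?thesis by linarith
  qed
  moreover have "exp (- ((mu - x')^2 / (4 * mu))) \<le> 1/2"
  proof -
    have "exp (- ((mu - x')^2 / (4 * mu))) \<le> exp (- (e^2 * u / 50))"
      using ghost_exponent_ge[OF u e] unfolding mu_def x'_def by simp
    moreover have "8 * exp (- (e^2 * u / 50)) \<le> 8 * tau * exp (- (e^2 * u / 50))" using tau1 by simp
    ultimately show ?thesis using tail by linarith
  qed
  moreover have "real (card (cballs_traces D k T)) \<le> tau" if "T \<subseteq> P" "card T = 2 * m" for T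
    using card_cballs_traces_le[OF finite_subset[OF that(1) P(1)], of D k] that(2)
    unfolding tau_def by (simp only: of_nat_le_iff)
  ultimately have "real (card (deviating_samples D k P m x y))
      \<le> 2 * tau * real (card P choose m) * exp (- (x' * (x' - x)^2 / (8 * (x + x')^2)))"
    using P x u unfolding mu_def by (intro card_deviating_samples_le_symmetrization) auto
  also have "\<dots> \<le> 2 * tau * real (card P choose m) * exp (- (e^2 * u / 50))"
    using symmetrization_exponent_ge[OF u e] tau1 unfolding x_def x'_def by (intro mult_left_mono) auto
  also have "\<dots> = (8 * tau * exp (- (e^2 * u / 50))) * (real (card P choose m) / 4)" by simp
  also have "\<dots> \<le> real (card P choose m) / 4" using tail tau1 by (intro mult_left_le_one_le) auto
  finally show ?thesis unfolding x_def y_def .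
qed

lemma card_deviating_samples_le_quarter_direct:
  fixes g e :: real and m k D :: nat
  defines "u \<equiv> g * real m" and "tau \<equiv> real (((2 * m + 1) ^ (D + 2) + 1) ^ k)"
  assumes P: "finite P" "0 < m" "m \<le> card P" "card P < 2 * m" and e: "0 < e" "e \<le> 1/2"
    and g: "0 < g" "real z = g * real (card P)"
    and tail: "8 * tau * exp (- (e^2 * u / 50)) \<le> 1"
  shows "real (card (deviating_samples D k P m ((1 + e)^2 * u) ((1 + 10 * e) * real z)))
    \<le> real (card P choose m) / 4"
proof -
  define x where "x = (1 + e)^2 * u"
  define mu where "mu = (1 + 10 * e) * u"
  have u: "0 < u" unfolding u_def using g P by simp
  have x: "0 \<le> x" "x \<le> mu" unfolding x_def mu_def using deviation_thresholds[OF u e] by auto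
  have mu: "0 < mu" unfolding mu_def using u e by simp
  have "0 < real (card P)" using P by simp
  then have "mu = (1 + 10 * e) * real z * real m / real (card P)" unfolding mu_def u_def g(2) by simp
  then have "real (card (deviating_samples D k P m x ((1 + 10 * e) * real z)))
      \<le> real (card (cballs_traces D k P)) * (real (card P choose m) * exp (- ((mu - x)^2 / (4 * mu))))"
    using P x mu by (intro card_deviating_samples_le_union_bound) auto
  also have "\<dots> \<le> tau * (real (card P choose m) * exp (- (e^2 * u / 50)))"
  proof (rule mult_mono)
    have "card (cballs_traces D k P) \<le> ((card P + 1) ^ (D + 2) + 1) ^ k" by (rule card_cballs_traces_le[OF P(1)])
    also have "\<dots> \<le> ((2 * m + 1) ^ (D + 2) + 1) ^ k" using P(4) by (intro power_mono add_mono) auto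
    finally show "real (card (cballs_traces D k P)) \<le> tau" unfolding tau_def by (simp only: of_nat_le_iff)
    show "real (card P choose m) * exp (- ((mu - x)^2 / (4 * mu))) \<le> real (card P choose m) * exp (- (e^2 * u / 50))"
      using direct_exponent_ge[OF u e] unfolding mu_def x_def by (intro mult_left_mono) auto
  qed (auto simp: tau_def)
  also have "\<dots> = (8 * tau * exp (- (e^2 * u / 50))) * (real (card P choose m) / 8)" by simp
  also have "\<dots> \<le> real (card P choose m) / 8" using tail by (intro mult_left_le_one_le) (auto simp: tau_def)
  finally show ?thesis unfolding x_def by simp
qed

lemma half_le_prob_pmf_of_set:
  assumes "finite X" "X \<noteq> {}" "B1 \<subseteq> X" "B2 \<subseteq> X" "X - B1 - B2 \<subseteq> G"
    and "real (card B1) \<le> real (card X) / 4" "real (card B2) \<le> real (card X) / 4"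
  shows "1/2 \<le> measure_pmf.prob (pmf_of_set X) G"
proof -
  have "card X \<le> card ((X \<inter> G) \<union> B1 \<union> B2)"
    using assms(1,3-5) by (intro card_mono) (auto intro: finite_subset)
  also have "\<dots> \<le> card ((X \<inter> G) \<union> B1) + card B2" by (rule card_Un_le)
  also have "\<dots> \<le> card (X \<inter> G) + card B1 + card B2" using card_Un_le[of "X \<inter> G" B1] by simp
  finally have "real (card X) / 2 \<le> real (card (X \<inter> G))" using assms(6,7) by linarith
  moreover have "0 < real (card X)" using assms(1,2) by (simp add: card_gt_0_iff)
  ultimately have "1/2 \<le> real (card (X \<inter> G)) / real (card X)" by (simp add: field_simps)
  also have "\<dots> = measure_pmf.prob (pmf_of_set X) G" using measure_pmf_of_set[OF assms(2,1)] by simp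
  finally show ?thesis .
qed

lemma prob_approx_sol_transfer_ge_half:
  assumes k: "k \<ge> 1" and D: "D \<ge> 1" and P: "finite P" "card P = n" and z: "0 < z" "z < n"
    and e: "0 < e" "e \<le> 1/2" and al: "0 < al" and mn: "sample_size k D e (real z / real n) \<le> n"
  shows "1/2 \<le> measure_pmf.prob (pmf_of_set {S. S \<subseteq> P \<and> card S = sample_size k D e (real z / real n)})
    {S. \<forall>E. approx_sol D k e S ((1 + e) * (real z / real n) * real (card S)) al E
      \<longrightarrow> approx_sol D k (10 * e) P (real z) al E}"
proof -
  define g where "g = real z / real n"
  define m where "m = sample_size k D e g"
  define u where "u = g * real m"
  define X where "X = subsets_of_size P m"
  define Good where "Good = {S. \<forall>E. approx_sol D k e S ((1 + e) * g * real (card S)) al E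
      \<longrightarrow> approx_sol D k (10 * e) P (real z) al E}"
  have g: "0 < g" "g < 1" "real z = g * real (card P)" unfolding g_def using z P by auto
  have m: "0 < m" "m \<le> card P" using sample_size_ge_one[OF k D e g(1,2)] mn P unfolding m_def g_def by auto
  have tail: "8 * real (((2 * m + 1) ^ (D + 2) + 1) ^ k) * exp (- (e^2 * (g * real m) / 50)) \<le> 1"
    using sample_size_tail_le[OF k D e g(1,2)] unfolding m_def .
  obtain Q0 where Q0: "Q0 \<subseteq> P" "real (card P) - real z \<le> real (card Q0)"
    "\<And>\<eta>. \<eta> > 0 \<Longrightarrow> \<exists>A. centers D k A \<and> cover_cost D A Q0 \<le> r_opt D k P (real z) + \<eta>"
    using near_optimal_inliers_exist[OF P(1) k, of "real z" D] by auto
  define Bad1 where "Bad1 = {S\<in>X. (1 + e) * u \<le> real (card (S \<inter> (P - Q0)))}"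
  define Bad2 where "Bad2 = deviating_samples D k P m ((1 + e)^2 * u) ((1 + 10 * e) * real z)"
  have "X - Bad1 - Bad2 \<subseteq> Good"
  proof
    fix S assume S: "S \<in> X - Bad1 - Bad2"
    then have SP: "S \<subseteq> P" and cS: "card S = m" unfolding X_def subsets_of_size_def by auto
    have "S - Q0 = S \<inter> (P - Q0)" using SP by auto
    then have few: "real (card (S - Q0)) \<le> (1 + e) * u" using S unfolding Bad1_def by auto
    have typical: "S \<in> subsets_of_size P m - deviating_samples D k P m ((1 + e) * ((1 + e) * u)) ((1 + 10 * e) * real z)"
      using S unfolding X_def Bad2_def by (simp add: power2_eq_square mult.assoc)
    have "0 \<le> (1 + e) * u" "0 \<le> e" unfolding u_def using g e by auto
    show "S \<in> Good" unfolding Good_def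
    proof (intro CollectI allI impI)
      fix E assume "approx_sol D k e S ((1 + e) * g * real (card S)) al E"
      then have "approx_sol D k e S ((1 + e) * u) al E" unfolding u_def cS by (simp add: mult.assoc)
      then show "approx_sol D k (10 * e) P (real z) al E"
        using approx_sol_transfer[OF P(1) SP \<open>0 \<le> (1 + e) * u\<close> \<open>0 \<le> e\<close> al Q0(1,3) few typical] by blast
    qed
  qed
  moreover have "real (card Bad1) \<le> real (card X) / 4"
    unfolding Bad1_def X_def card_subsets_of_size[OF P(1)] u_def using P m e g Q0(1,2) tail
    by (intro card_samples_with_many_outliers_le_quarter) auto
  moreover have "real (card Bad2) \<le> real (card X) / 4"
  proof (cases "2 * m \<le> card P")
    case True
    then show ?thesis unfolding Bad2_def X_def card_subsets_of_size[OF P(1)] u_def using P m e g tail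
      by (intro card_deviating_samples_le_quarter_symmetrized) auto
  next
    case False
    then show ?thesis unfolding Bad2_def X_def card_subsets_of_size[OF P(1)] u_def using P m e g tail
      by (intro card_deviating_samples_le_quarter_direct) auto
  qed
  moreover have "finite X" "X \<noteq> {}"
    unfolding X_def using finite_subsets_of_size[OF P(1)] card_subsets_of_size[OF P(1), of m] m by auto
  moreover have "Bad1 \<subseteq> X" "Bad2 \<subseteq> X" unfolding Bad1_def Bad2_def deviating_samples_def X_def by auto
  ultimately have "1/2 \<le> measure_pmf.prob (pmf_of_set X) Good"
    by (intro half_le_prob_pmf_of_set)
  then show ?thesis unfolding X_def subsets_of_size_def Good_def m_def g_def .
qed

theorem theorem11:
  shows "\<exists>C::real>0. \<exists>p0::real>0. \<exists>m :: nat \<Rightarrow> nat \<Rightarrow> real \<Rightarrow> real \<Rightarrow> nat.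
    (\<exists>c0::real. \<exists>c1::nat. \<forall>k D \<epsilon> \<gamma>. k \<ge> 1 \<longrightarrow> D \<ge> 1 \<longrightarrow> 0 < \<epsilon> \<longrightarrow> \<epsilon> \<le> 1/2 \<longrightarrow> 0 < \<gamma> \<longrightarrow> \<gamma> < 1 \<longrightarrow>
        real (m k D \<epsilon> \<gamma>) \<le> c0 * (real k * real D / (\<epsilon>^2 * \<gamma>)) * (ln (real k * real D / (\<epsilon> * \<gamma>))) ^ c1) \<and>
    (\<forall>D k (P :: (nat \<Rightarrow> real) set) (n::nat) (z::nat) \<epsilon> \<alpha>.
       k \<ge> 1 \<longrightarrow> D \<ge> 1 \<longrightarrow> finite P \<longrightarrow> P \<subseteq> RD D \<longrightarrow> card P = n \<longrightarrow> 0 < z \<longrightarrow> z < n \<longrightarrow>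
       0 < \<epsilon> \<longrightarrow> \<epsilon> \<le> 1/2 \<longrightarrow> 0 < \<alpha> \<longrightarrow> m k D \<epsilon> (real z / real n) \<le> n \<longrightarrow>
       measure_pmf.prob (pmf_of_set {S. S \<subseteq> P \<and> card S = m k D \<epsilon> (real z / real n)})
         {S. \<forall>E. approx_sol D k \<epsilon> S ((1 + \<epsilon>) * (real z / real n) * real (card S)) \<alpha> E
                 \<longrightarrow> approx_sol D k (C * \<epsilon>) P (real z) \<alpha> E} \<ge> p0)"
proof -
  have size: "\<exists>c0::real. \<exists>c1::nat. \<forall>k D \<epsilon> \<gamma>. k \<ge> 1 \<longrightarrow> D \<ge> 1 \<longrightarrow> 0 < \<epsilon> \<longrightarrow> \<epsilon> \<le> 1/2 \<longrightarrow>
      0 < \<gamma> \<longrightarrow> \<gamma> < 1 \<longrightarrow>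
      real (sample_size k D \<epsilon> \<gamma>) \<le> c0 * (real k * real D / (\<epsilon>^2 * \<gamma>)) * (ln (real k * real D / (\<epsilon> * \<gamma>))) ^ c1"
    by (intro exI[of _ "20002::real"] exI[of _ "1::nat"] allI impI)
      (simp only: power_one_right, rule sample_size_le)
  have prob: "\<forall>D k (P :: (nat \<Rightarrow> real) set) (n::nat) (z::nat) \<epsilon> \<alpha>.
      k \<ge> 1 \<longrightarrow> D \<ge> 1 \<longrightarrow> finite P \<longrightarrow> P \<subseteq> RD D \<longrightarrow> card P = n \<longrightarrow> 0 < z \<longrightarrow> z < n \<longrightarrow>
      0 < \<epsilon> \<longrightarrow> \<epsilon> \<le> 1/2 \<longrightarrow> 0 < \<alpha> \<longrightarrow> sample_size k D \<epsilon> (real z / real n) \<le> n \<longrightarrow>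
      measure_pmf.prob (pmf_of_set {S. S \<subseteq> P \<and> card S = sample_size k D \<epsilon> (real z / real n)})
        {S. \<forall>E. approx_sol D k \<epsilon> S ((1 + \<epsilon>) * (real z / real n) * real (card S)) \<alpha> E
                \<longrightarrow> approx_sol D k (10 * \<epsilon>) P (real z) \<alpha> E} \<ge> 1/2"
    using prob_approx_sol_transfer_ge_half by auto
  show ?thesis
    by (rule exI[of _ 10], rule conjI, simp, rule exI[of _ "1/2"], rule conjI, simp) (use size prob in blast)
qed

end
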